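(* Let $d,n\in\mathbb{N}$. As differential operators acting on $C_c^\infty(\mathbb{R}^d\setminus\{0\})$, $$U(1-\Delta_{\mathbb{R}^d})^nU^{-1}=\sum_{|\gamma|_1\leq 2n}\partial^{\gamma}M_{p_{\gamma}}$$ for some polynomials $p_\gamma$ of degree at most $4n$; moreover, for $|\gamma|_1=2n$ each $p_\gamma$ is a scalar multiple of $h_{4n}$, while for $|\gamma|_1<2n$ the polynomials $p_\gamma$ have degree strictly less than $4n$.
   Context: $U$ is the unitary operator on $L_2(\mathbb{R}^d)$ given by $(U\xi)(t)=|t|^{-d}\xi(t/|t|^2)$ (note $U=U^{-1}$). $h_z(t)=|t|^z$, $t\in\mathbb{R}^d$ (so $h_{4n}=(|t|^2)^{2n}$ is a polynomial). $\partial^\gamma M_p$ denotes the operator $u\mapsto\partial^\gamma(pu)$, $\partial^\gamma$ being the partial derivative with multi-index $\gamma$; $\Delta_{\mathbb{R}^d}$ is the Laplacian. *)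

theory Defs
  imports "HOL-Analysis.Analysis"
begin

definition pd :: "'d::finite \<Rightarrow> (real^'d \<Rightarrow> complex) \<Rightarrow> (real^'d \<Rightarrow> complex)" where
  "pd i f = (\<lambda>x. vector_derivative (\<lambda>t. f (x + t *\<^sub>R axis i 1)) (at 0))"

fun pdl :: "'d::finite list \<Rightarrow> (real^'d \<Rightarrow> complex) \<Rightarrow> (real^'d \<Rightarrow> complex)" where
  "pdl [] f = f"
| "pdl (i # is) f = pd i (pdl is f)"

text \<open>Multi-index derivative; the order of differentiation is irrelevant for smooth functions.\<close>
definition partial :: "('d::finite \<Rightarrow> nat) \<Rightarrow> (real^'d \<Rightarrow> complex) \<Rightarrow> (real^'d \<Rightarrow> complex)" where
  "partial \<gamma> f = pdl (SOME xs. \<forall>i. count_list xs i = \<gamma> i) f"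

definition mi_norm :: "('d::finite \<Rightarrow> nat) \<Rightarrow> nat" where
  "mi_norm \<gamma> = (\<Sum>i\<in>UNIV. \<gamma> i)"

definition smooth_fun :: "(real^'d::finite \<Rightarrow> complex) \<Rightarrow> bool" where
  "smooth_fun f \<longleftrightarrow> (\<forall>is x. (pdl is f) differentiable (at x))"

definition test_fun :: "(real^'d::finite \<Rightarrow> complex) \<Rightarrow> bool" where
  "test_fun f \<longleftrightarrow> smooth_fun f \<and> compact (closure {x. f x \<noteq> 0}) \<and> 0 \<notin> closure {x. f x \<noteq> 0}"

definition laplacian :: "(real^'d::finite \<Rightarrow> complex) \<Rightarrow> (real^'d \<Rightarrow> complex)" where
  "laplacian f = (\<lambda>x. \<Sum>i\<in>UNIV. pd i (pd i f) x)"

definition one_minus_lap_pow :: "nat \<Rightarrow> (real^'d::finite \<Rightarrow> complex) \<Rightarrow> (real^'d \<Rightarrow> complex)" where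
  "one_minus_lap_pow n = ((\<lambda>f x. f x - laplacian f x) ^^ n)"

text \<open>(U xi)(t) = |t|^{-d} xi(t/|t|^2); U is its own inverse.\<close>
definition U_op :: "(real^'d::finite \<Rightarrow> complex) \<Rightarrow> (real^'d \<Rightarrow> complex)" where
  "U_op \<xi> = (\<lambda>t. complex_of_real (norm t powr (- real CARD('d))) * \<xi> ((1 / (norm t)\<^sup>2) *\<^sub>R t))"

definition mpoly_eval :: "(('d::finite \<Rightarrow> nat) \<Rightarrow> complex) \<Rightarrow> real^'d \<Rightarrow> complex" where
  "mpoly_eval c x = (\<Sum>\<alpha>\<in>{\<alpha>. c \<alpha> \<noteq> 0}. c \<alpha> * (\<Prod>i\<in>UNIV. complex_of_real (x $ i) ^ \<alpha> i))"

definition poly_deg_lt :: "nat \<Rightarrow> (real^'d::finite \<Rightarrow> complex) \<Rightarrow> bool" where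
  "poly_deg_lt N p \<longleftrightarrow> (\<exists>c. finite {\<alpha>. c \<alpha> \<noteq> 0} \<and> (\<forall>\<alpha>. N \<le> mi_norm \<alpha> \<longrightarrow> c \<alpha> = 0) \<and> p = mpoly_eval c)"

definition h_pow :: "nat \<Rightarrow> real^'d::finite \<Rightarrow> complex" where
  "h_pow k x = complex_of_real (norm x ^ k)"

end

theory Submission
  imports Defs
begin

text \<open>
  For a test function \<open>q\<close>, a direct computation along coordinate lines gives
  \<open>\<Delta> (U q) = U (h\<^sub>2 \<Delta> (h\<^sub>2 q))\<close>; the second order terms match because the inversion
  \<open>y \<mapsto> y / |y|\<^sup>2\<close> is conformal. Hence \<open>U (1 - \<Delta>)\<^sup>n U = (1 - h\<^sub>2 \<Delta> h\<^sub>2)\<^sup>n\<close> on test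
  functions. This operator is brought into the normal form \<open>\<Sum> \<partial>\<^sup>\<gamma> M\<^sub>p\<close> by moving every
  multiplication operator to the left of the derivatives with the Leibniz rule. Every derivative
  that is moved lowers the degree of a coefficient by one, which gives the degree bounds; at top
  order \<open>|\<gamma>| = 2n\<close> only the terms in which nothing was moved survive, and their coefficients
  are products of \<open>h\<^sub>2\<close>'s, i.e. multiples of \<open>h\<^sub>4\<^sub>n\<close>. Symmetry of mixed partial derivatives
  finally groups the terms by multi-index.
\<close>

section \<open>Partial derivatives\<close>

lemma has_derivative_imp_pd:
  assumes "(f has_derivative f') (at x)"
  shows "pd i f x = f' (axis i 1)"
proof -
  have line: "((\<lambda>t::real. x + t *\<^sub>R axis i 1) has_derivative (\<lambda>t. t *\<^sub>R axis i 1)) (at 0)"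
    by (auto intro!: derivative_eq_intros)
  have "((\<lambda>t. f (x + t *\<^sub>R axis i 1)) has_derivative (\<lambda>t. f' (t *\<^sub>R axis i 1))) (at 0)"
    using has_derivative_compose[OF line] assms by simp
  moreover have "(\<lambda>t. f' (t *\<^sub>R axis i 1)) = (\<lambda>t. t *\<^sub>R f' (axis i 1))"
    using has_derivative_bounded_linear[OF assms] by (simp add: linear_simps)
  ultimately show ?thesis
    by (simp add: pd_def vector_derivative_at has_vector_derivative_def)
qed

lemma sum_axis_mult:
  "(\<Sum>j\<in>UNIV. of_real ((axis i 1 :: real^'d::finite) $ j) * (c j :: complex)) = c i"
proof -
  have "(\<Sum>j\<in>UNIV. of_real ((axis i 1 :: real^'d) $ j) * c j) = (\<Sum>j\<in>UNIV. if j = i then c j else 0)"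
    by (rule sum.cong) (auto simp: axis_def)
  then show ?thesis by simp
qed

lemma has_derivative_pd_expansion:
  fixes f :: "real^'d::finite \<Rightarrow> complex"
  assumes "f differentiable (at x)"
  shows "(f has_derivative (\<lambda>h. \<Sum>j\<in>UNIV. of_real (h$j) * pd j f x)) (at x)"
proof -
  obtain f' where f': "(f has_derivative f') (at x)"
    using assms differentiable_def by blast
  have "f' h = (\<Sum>j\<in>UNIV. of_real (h$j) * pd j f x)" for h
  proof -
    have "f' h = f' (\<Sum>j\<in>UNIV. (h$j) *\<^sub>R axis j 1)"
      using basis_expansion[of h] by (simp add: scalar_mult_eq_scaleR)
    also have "\<dots> = (\<Sum>j\<in>UNIV. (h$j) *\<^sub>R f' (axis j 1))"
      using has_derivative_bounded_linear[OF f']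
      by (simp add: linear_sum[OF has_derivative_linear[OF f']] linear_simps)
    finally show ?thesis
      by (simp add: has_derivative_imp_pd[OF f'] scaleR_conv_of_real)
  qed
  then have "f' = (\<lambda>h. \<Sum>j\<in>UNIV. of_real (h$j) * pd j f x)" by auto
  with f' show ?thesis by simp
qed

lemma pd_add:
  fixes f g :: "real^'d::finite \<Rightarrow> complex"
  assumes "f differentiable (at x)" "g differentiable (at x)"
  shows "pd i (\<lambda>y. f y + g y) x = pd i f x + pd i g x"
  using has_derivative_imp_pd[OF has_derivative_add[OF has_derivative_pd_expansion[OF assms(1)]
      has_derivative_pd_expansion[OF assms(2)]], of i]
  by (simp add: sum_axis_mult)

lemma pd_mult:
  fixes f g :: "real^'d::finite \<Rightarrow> complex"
  assumes "f differentiable (at x)" "g differentiable (at x)"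
  shows "pd i (\<lambda>y. f y * g y) x = pd i f x * g x + f x * pd i g x"
  using has_derivative_imp_pd[OF has_derivative_mult[OF has_derivative_pd_expansion[OF assms(1)]
      has_derivative_pd_expansion[OF assms(2)]], of i]
  by (simp add: sum_axis_mult)

lemma pd_const: "pd i (\<lambda>y. c) x = 0"
  using has_derivative_imp_pd[OF has_derivative_const, of i c x] by simp

lemma pd_cmult:
  fixes f :: "real^'d::finite \<Rightarrow> complex"
  assumes "f differentiable (at x)"
  shows "pd i (\<lambda>y. c * f y) x = c * pd i f x"
  using pd_mult[OF differentiable_const assms, of i c] by (simp add: pd_const)

lemma differentiable_sum_list:
  fixes F :: "'a \<Rightarrow> real^'d::finite \<Rightarrow> complex"
  assumes "\<And>a. a \<in> set as \<Longrightarrow> F a differentiable (at x)"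
  shows "(\<lambda>y. \<Sum>a\<leftarrow>as. F a y) differentiable (at x)"
  using assms by (induction as) auto

lemma pd_sum_list:
  fixes F :: "'a \<Rightarrow> real^'d::finite \<Rightarrow> complex"
  assumes "\<And>a. a \<in> set as \<Longrightarrow> F a differentiable (at x)"
  shows "pd i (\<lambda>y. \<Sum>a\<leftarrow>as. F a y) x = (\<Sum>a\<leftarrow>as. pd i (F a) x)"
  using assms
proof (induction as)
  case (Cons a as)
  then show ?case
    by (simp add: pd_add differentiable_sum_list)
qed (simp add: pd_const)

lemma has_vector_derivative_comp_pd:
  fixes g :: "real^'d::finite \<Rightarrow> complex"
  assumes "g differentiable (at (c t))" "(c has_vector_derivative c') (at t)"
  shows "((\<lambda>s. g (c s)) has_vector_derivative (\<Sum>k\<in>UNIV. of_real (c' $ k) * pd k g (c t))) (at t)"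
proof -
  have "(c has_derivative (\<lambda>h. h *\<^sub>R c')) (at t)"
    using assms(2) by (simp add: has_vector_derivative_def)
  from has_derivative_compose[OF this has_derivative_pd_expansion[OF assms(1)]]
  have "((\<lambda>s. g (c s)) has_derivative (\<lambda>h. \<Sum>k\<in>UNIV. of_real ((h *\<^sub>R c') $ k) * pd k g (c t))) (at t)" .
  moreover have "(\<lambda>h. \<Sum>k\<in>UNIV. of_real ((h *\<^sub>R c') $ k) * pd k g (c t))
      = (\<lambda>h. h *\<^sub>R (\<Sum>k\<in>UNIV. of_real (c' $ k) * pd k g (c t)))"
    unfolding vector_scaleR_component
    by (simp add: scaleR_conv_of_real sum_distrib_left mult.assoc)
  ultimately show ?thesis by (simp add: has_vector_derivative_def)
qed

lemma has_vector_derivative_pd_line: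
  fixes f :: "real^'d::finite \<Rightarrow> complex"
  assumes "f differentiable (at (y + s *\<^sub>R axis i 1))"
  shows "((\<lambda>t. f (y + t *\<^sub>R axis i 1)) has_vector_derivative pd i f (y + s *\<^sub>R axis i 1)) (at s)"
proof -
  have "((\<lambda>t. y + t *\<^sub>R axis i 1) has_vector_derivative axis i 1) (at s)"
    by (auto intro!: derivative_eq_intros)
  from has_vector_derivative_comp_pd[OF assms this] show ?thesis
    by (simp add: sum_axis_mult)
qed

lemma pd_cong_open:
  assumes "open S" "x \<in> S" "\<And>y. y \<in> S \<Longrightarrow> f y = g y"
  shows "pd i f x = pd i g x"
proof -
  have "isCont (\<lambda>t::real. x + t *\<^sub>R axis i 1) 0"
    by (intro continuous_intros)
  then have "((\<lambda>t::real. x + t *\<^sub>R axis i 1) \<longlongrightarrow> x) (nhds 0)"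
    using tendsto_at_iff_tendsto_nhds[of "\<lambda>t::real. x + t *\<^sub>R axis i 1" 0]
    by (simp add: isCont_def)
  moreover have "eventually (\<lambda>y. y \<in> S) (nhds x)"
    using assms eventually_nhds_in_open by blast
  ultimately have "eventually (\<lambda>t. x + t *\<^sub>R axis i 1 \<in> S) (nhds (0::real))"
    by (rule eventually_compose_filterlim[rotated])
  then have "eventually (\<lambda>t. f (x + t *\<^sub>R axis i 1) = g (x + t *\<^sub>R axis i 1)) (nhds (0::real))"
    by eventually_elim (simp add: assms)
  then show ?thesis
    unfolding pd_def by (intro vector_derivative_cong_eq) auto
qed

lemma pdl_vanishes_on_open:
  assumes "open S" "\<And>y. y \<in> S \<Longrightarrow> g y = 0" "y \<in> S"
  shows "pdl is g y = 0"
  using assms(3)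
proof (induction "is" arbitrary: y)
  case (Cons i "is")
  then have "pd i (pdl is g) y = pd i (\<lambda>_. 0) y"
    by (intro pd_cong_open[OF assms(1)]) auto
  then show ?case by (simp add: pd_const)
qed (use assms(2) in simp)

section \<open>Smooth functions\<close>

lemma pdl_append: "pdl (xs @ ys) f = pdl xs (pdl ys f)"
  by (induction xs) auto

lemma pdl_const: "pdl is (\<lambda>y. c) = (\<lambda>y. if is = [] then c else 0)"
  by (induction "is") (auto simp: pd_const cong: if_cong)

definition smooth_upto :: "nat \<Rightarrow> (real^'d::finite \<Rightarrow> complex) \<Rightarrow> bool" where
  "smooth_upto m f \<longleftrightarrow> (\<forall>is x. length is \<le> m \<longrightarrow> pdl is f differentiable (at x))"

lemma smooth_fun_iff_smooth_upto: "smooth_fun f \<longleftrightarrow> (\<forall>m. smooth_upto m f)"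
  unfolding smooth_fun_def smooth_upto_def by auto

lemma smooth_upto_mono: "smooth_upto m f \<Longrightarrow> k \<le> m \<Longrightarrow> smooth_upto k f"
  unfolding smooth_upto_def by auto

lemma smooth_upto_differentiable: "smooth_upto m f \<Longrightarrow> f differentiable (at x)"
  unfolding smooth_upto_def by (metis le0 list.size(3) pdl.simps(1))

lemma smooth_upto_pd:
  assumes "smooth_upto (Suc m) f"
  shows "smooth_upto m (pd i f)"
  unfolding smooth_upto_def
proof (intro allI impI)
  fix "is" :: "'a list" and x
  assume "length is \<le> m"
  with assms have "pdl (is @ [i]) f differentiable (at x)"
    unfolding smooth_upto_def by simp
  then show "pdl is (pd i f) differentiable (at x)"
    by (simp add: pdl_append)
qed

lemma smooth_upto_const: "smooth_upto m (\<lambda>y. c)"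
  unfolding smooth_upto_def pdl_const by auto

lemma pdl_add:
  assumes "smooth_upto m f" "smooth_upto m g" "length is \<le> Suc m"
  shows "pdl is (\<lambda>y. f y + g y) = (\<lambda>y. pdl is f y + pdl is g y)"
  using assms(3)
proof (induction "is")
  case (Cons i "is")
  then show ?case
    using assms unfolding smooth_upto_def by (auto intro!: pd_add)
qed simp

lemma smooth_upto_add:
  assumes "smooth_upto m f" "smooth_upto m g"
  shows "smooth_upto m (\<lambda>y. f y + g y)"
  using assms pdl_add[OF assms] unfolding smooth_upto_def by auto

lemma smooth_upto_mult: "smooth_upto m f \<Longrightarrow> smooth_upto m g \<Longrightarrow> smooth_upto m (\<lambda>y. f y * g y)"
proof (induction m arbitrary: f g)
  case 0
  then show ?case unfolding smooth_upto_def by auto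
next
  case (Suc m)
  show ?case unfolding smooth_upto_def
  proof (intro allI impI)
    fix "is" :: "'a list" and x
    assume len: "length is \<le> Suc m"
    show "pdl is (\<lambda>y. f y * g y) differentiable (at x)"
    proof (cases "is" rule: rev_exhaust)
      case Nil
      then show ?thesis
        using Suc.prems by (auto intro!: differentiable_mult dest: smooth_upto_differentiable)
    next
      case (snoc js i)
      have "pd i (\<lambda>y. f y * g y) = (\<lambda>y. pd i f y * g y + f y * pd i g y)"
        using Suc.prems by (auto intro!: pd_mult dest: smooth_upto_differentiable)
      moreover have "smooth_upto m (\<lambda>y. pd i f y * g y + f y * pd i g y)"
        using Suc.prems by (intro smooth_upto_add Suc.IH) (auto intro: smooth_upto_pd smooth_upto_mono)
      ultimately show ?thesis
        using snoc len unfolding smooth_upto_def by (simp add: pdl_append)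
    qed
  qed
qed

lemma smooth_fun_differentiable: "smooth_fun f \<Longrightarrow> f differentiable (at x)"
  unfolding smooth_fun_def by (metis pdl.simps(1))

lemma smooth_fun_const: "smooth_fun (\<lambda>y. c)"
  by (simp add: smooth_fun_iff_smooth_upto smooth_upto_const)

lemma smooth_fun_add: "smooth_fun f \<Longrightarrow> smooth_fun g \<Longrightarrow> smooth_fun (\<lambda>y. f y + g y)"
  by (simp add: smooth_fun_iff_smooth_upto smooth_upto_add)

lemma smooth_fun_mult: "smooth_fun f \<Longrightarrow> smooth_fun g \<Longrightarrow> smooth_fun (\<lambda>y. f y * g y)"
  by (simp add: smooth_fun_iff_smooth_upto smooth_upto_mult)

lemma smooth_fun_cmult: "smooth_fun f \<Longrightarrow> smooth_fun (\<lambda>y. c * f y)"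
  by (rule smooth_fun_mult[OF smooth_fun_const])

lemma smooth_fun_minus: "smooth_fun f \<Longrightarrow> smooth_fun (\<lambda>y. - f y)"
  using smooth_fun_cmult[of f "-1"] by simp

lemma smooth_fun_pd: "smooth_fun f \<Longrightarrow> smooth_fun (pd i f)"
  by (meson smooth_upto_pd smooth_fun_iff_smooth_upto)

lemma smooth_fun_pdl: "smooth_fun f \<Longrightarrow> smooth_fun (pdl is f)"
  by (induction "is") (auto intro: smooth_fun_pd)

lemma smooth_fun_sum_list:
  "(\<And>a. a \<in> set as \<Longrightarrow> smooth_fun (F a)) \<Longrightarrow> smooth_fun (\<lambda>y. \<Sum>a\<leftarrow>as. F a y)"
  by (induction as) (auto intro: smooth_fun_add smooth_fun_const)

lemma pdl_cmult: "smooth_fun f \<Longrightarrow> pdl is (\<lambda>y. c * f y) = (\<lambda>y. c * pdl is f y)"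
  by (induction "is") (auto intro!: pd_cmult smooth_fun_differentiable smooth_fun_pdl)

lemma pdl_sum_list:
  assumes "\<And>a. a \<in> set as \<Longrightarrow> smooth_fun (F a)"
  shows "pdl is (\<lambda>y. \<Sum>a\<leftarrow>as. F a y) = (\<lambda>y. \<Sum>a\<leftarrow>as. pdl is (F a) y)"
  using assms
proof (induction "is")
  case (Cons i "is")
  then show ?case
    by (auto intro!: pd_sum_list smooth_fun_differentiable smooth_fun_pdl)
qed simp

section \<open>Symmetry of mixed partial derivatives\<close>

lemma mvt_estimate:
  fixes \<phi> :: "real \<Rightarrow> complex"
  assumes "0 < h" "\<And>t. (\<phi> has_vector_derivative \<phi>' t) (at t)"
    and "\<And>t. 0 \<le> t \<Longrightarrow> t \<le> h \<Longrightarrow> norm (\<phi>' t - A) \<le> e"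
  shows "norm (\<phi> h - \<phi> 0 - h *\<^sub>R A) \<le> h * e"
proof -
  have "((\<lambda>t. \<phi> t - t *\<^sub>R A) has_vector_derivative \<phi>' t - A) (at t)" for t
    using assms(2)[of t] by (auto intro!: derivative_eq_intros)
  then have "continuous_on {0..h} (\<lambda>t. \<phi> t - t *\<^sub>R A)"
    by (meson continuous_at_imp_continuous_on has_vector_derivative_continuous)
  from mvt_general[OF assms(1) this, of "\<lambda>t s. s *\<^sub>R (\<phi>' t - A)"]
  obtain t where "t \<in> {0<..<h}" "norm (\<phi> h - h *\<^sub>R A - \<phi> 0) \<le> norm (h *\<^sub>R (\<phi>' t - A))"
    using \<open>\<And>t. ((\<lambda>t. \<phi> t - t *\<^sub>R A) has_vector_derivative \<phi>' t - A) (at t)\<close>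
    by (auto simp: has_vector_derivative_def)
  moreover from this(1) have "norm (h *\<^sub>R (\<phi>' t - A)) \<le> h * e"
    using assms(1) assms(3)[of t] by (simp add: mult_left_mono)
  ultimately show ?thesis
    by (simp add: algebra_simps)
qed

lemma second_difference_estimate:
  fixes f :: "real^'d::finite \<Rightarrow> complex"
  assumes f: "smooth_fun f" and h: "0 < h"
    and bound: "\<And>\<sigma> \<tau>. 0 \<le> \<sigma> \<Longrightarrow> \<sigma> \<le> h \<Longrightarrow> 0 \<le> \<tau> \<Longrightarrow> \<tau> \<le> h \<Longrightarrow>
       norm (pd j (pd i f) (x + \<sigma> *\<^sub>R axis i 1 + \<tau> *\<^sub>R axis j 1) - A) \<le> e"
  shows "norm (f (x + h *\<^sub>R axis j 1 + h *\<^sub>R axis i 1) - f (x + h *\<^sub>R axis i 1)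
           - f (x + h *\<^sub>R axis j 1) + f x - (h*h) *\<^sub>R A) \<le> e * (h*h)"
proof -
  define a :: "real^'d" where "a = axis i 1"
  define b :: "real^'d" where "b = axis j 1"
  have df: "f differentiable (at z)" and dP: "pd i f differentiable (at z)" for z
    using f smooth_fun_differentiable smooth_fun_pd by blast+
  have "norm (pd i f (x + \<sigma> *\<^sub>R a + h *\<^sub>R b) - pd i f (x + \<sigma> *\<^sub>R a) - h *\<^sub>R A) \<le> h * e"
    if "0 \<le> \<sigma>" "\<sigma> \<le> h" for \<sigma>
    using mvt_estimate[OF h has_vector_derivative_pd_line[OF dP]] bound that
    unfolding a_def b_def by simp
  then have inner: "norm (pd i f (x + h *\<^sub>R b + \<sigma> *\<^sub>R a) - pd i f (x + \<sigma> *\<^sub>R a) - h *\<^sub>R A) \<le> h * e"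
    if "0 \<le> \<sigma>" "\<sigma> \<le> h" for \<sigma>
    using that by (simp add: add_ac)
  have "((\<lambda>\<sigma>. f (x + h *\<^sub>R b + \<sigma> *\<^sub>R a) - f (x + \<sigma> *\<^sub>R a)) has_vector_derivative
      pd i f (x + h *\<^sub>R b + \<sigma> *\<^sub>R a) - pd i f (x + \<sigma> *\<^sub>R a)) (at \<sigma>)" for \<sigma>
    unfolding a_def by (intro has_vector_derivative_diff has_vector_derivative_pd_line df)
  from mvt_estimate[OF h this inner]
  show ?thesis
    unfolding a_def b_def by (simp add: algebra_simps)
qed

lemma continuous_at_small_on_square:
  fixes g :: "real^'d::finite \<Rightarrow> complex"
  assumes "continuous (at x) g" "0 < e"
  obtains h where "0 < h" "\<And>\<sigma> \<tau>. 0 \<le> \<sigma> \<Longrightarrow> \<sigma> \<le> h \<Longrightarrow> 0 \<le> \<tau> \<Longrightarrow> \<tau> \<le> h \<Longrightarrow>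
    norm (g (x + \<sigma> *\<^sub>R axis k 1 + \<tau> *\<^sub>R axis l 1) - g x) \<le> e"
proof -
  obtain \<delta> where "\<delta> > 0" and \<delta>: "\<And>z. dist z x < \<delta> \<Longrightarrow> dist (g z) (g x) < e"
    using assms unfolding continuous_at_eps_delta by blast
  have "dist (x + \<sigma> *\<^sub>R axis k 1 + \<tau> *\<^sub>R axis l 1) x < \<delta>"
    if "0 \<le> \<sigma>" "\<sigma> \<le> \<delta> / 4" "0 \<le> \<tau>" "\<tau> \<le> \<delta> / 4" for \<sigma> \<tau>
    using norm_triangle_ineq[of "\<sigma> *\<^sub>R axis k (1::real)" "\<tau> *\<^sub>R axis l 1"] that \<open>\<delta> > 0\<close>
    by (simp add: dist_norm)
  with \<delta> \<open>\<delta> > 0\<close> show ?thesis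
    by (intro that[of "\<delta> / 4"]) (auto simp: dist_norm less_imp_le)
qed

text \<open>Both mixed partial derivatives at \<open>x\<close> are limits of the same second difference quotient.\<close>

lemma pd_commute:
  fixes f :: "real^'d::finite \<Rightarrow> complex"
  assumes f: "smooth_fun f"
  shows "pd j (pd i f) x = pd i (pd j f) x"
proof (rule ccontr)
  define A where "A = pd j (pd i f) x"
  define B where "B = pd i (pd j f) x"
  define e where "e = norm (A - B) / 4"
  assume "pd j (pd i f) x \<noteq> pd i (pd j f) x"
  then have "e > 0"
    by (simp add: e_def A_def B_def)
  have "continuous (at x) (pd j (pd i f))" "continuous (at x) (pd i (pd j f))"
    using smooth_fun_differentiable[OF smooth_fun_pd[OF smooth_fun_pd[OF f]]]
    by (blast intro: differentiable_imp_continuous_within)+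
  from continuous_at_small_on_square[OF this(1) \<open>e > 0\<close>, of i j]
    continuous_at_small_on_square[OF this(2) \<open>e > 0\<close>, of j i]
  obtain h1 h2 where "0 < h1" "0 < h2"
    and h1: "\<And>\<sigma> \<tau>. 0 \<le> \<sigma> \<Longrightarrow> \<sigma> \<le> h1 \<Longrightarrow> 0 \<le> \<tau> \<Longrightarrow> \<tau> \<le> h1 \<Longrightarrow>
      norm (pd j (pd i f) (x + \<sigma> *\<^sub>R axis i 1 + \<tau> *\<^sub>R axis j 1) - A) \<le> e"
    and h2: "\<And>\<sigma> \<tau>. 0 \<le> \<sigma> \<Longrightarrow> \<sigma> \<le> h2 \<Longrightarrow> 0 \<le> \<tau> \<Longrightarrow> \<tau> \<le> h2 \<Longrightarrow>
      norm (pd i (pd j f) (x + \<sigma> *\<^sub>R axis j 1 + \<tau> *\<^sub>R axis i 1) - B) \<le> e"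
    unfolding A_def B_def by metis
  define h where "h = min h1 h2"
  have "h > 0"
    using \<open>0 < h1\<close> \<open>0 < h2\<close> by (simp add: h_def)
  have "norm (f (x + h *\<^sub>R axis j 1 + h *\<^sub>R axis i 1) - f (x + h *\<^sub>R axis i 1)
      - f (x + h *\<^sub>R axis j 1) + f x - (h*h) *\<^sub>R A) \<le> e * (h*h)"
    "norm (f (x + h *\<^sub>R axis i 1 + h *\<^sub>R axis j 1) - f (x + h *\<^sub>R axis j 1)
      - f (x + h *\<^sub>R axis i 1) + f x - (h*h) *\<^sub>R B) \<le> e * (h*h)"
    using h1 h2 by (intro second_difference_estimate[OF f \<open>h > 0\<close>]; simp add: h_def)+
  moreover have "(h*h) *\<^sub>R (A - B) = (f (x + h *\<^sub>R axis i 1 + h *\<^sub>R axis j 1) - f (x + h *\<^sub>R axis j 1)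
      - f (x + h *\<^sub>R axis i 1) + f x - (h*h) *\<^sub>R B)
    - (f (x + h *\<^sub>R axis j 1 + h *\<^sub>R axis i 1) - f (x + h *\<^sub>R axis i 1)
      - f (x + h *\<^sub>R axis j 1) + f x - (h*h) *\<^sub>R A)"
    by (simp add: algebra_simps)
  ultimately have "norm ((h*h) *\<^sub>R (A - B)) \<le> e * (h*h) + e * (h*h)"
    using norm_triangle_ineq4 by (smt (verit))
  moreover have "norm ((h*h) *\<^sub>R (A - B)) = (h*h) * norm (A - B)"
    using \<open>h > 0\<close> by simp
  ultimately have "(h*h) * norm (A - B) \<le> (h*h) * (2 * e)"
    by (simp add: algebra_simps)
  with \<open>h > 0\<close> \<open>e > 0\<close> show False
    by (simp add: e_def)
qed

lemma pdl_move_to_front: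
  assumes "smooth_fun f"
  shows "pdl (ys @ a # zs) f = pd a (pdl (ys @ zs) f)"
proof (induction ys)
  case (Cons y ys)
  then show ?case
    using pd_commute[OF smooth_fun_pdl[OF assms]] by auto
qed simp

lemma pdl_mset_eq:
  assumes "smooth_fun f" "mset xs = mset ys"
  shows "pdl xs f = pdl ys f"
  using assms(2)
proof (induction xs arbitrary: ys)
  case (Cons a xs)
  then obtain ys1 ys2 where ys: "ys = ys1 @ a # ys2"
    by (metis list.set_intros(1) set_mset_mset split_list)
  with Cons.prems have "pdl xs f = pdl (ys1 @ ys2) f"
    by (intro Cons.IH) simp
  then show ?case
    using ys pdl_move_to_front[OF assms(1)] by simp
qed simp

lemma partial_count_list:
  assumes "smooth_fun f"
  shows "partial (count_list xs) f = pdl xs f"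
proof -
  let ?ys = "SOME ys. \<forall>i. count_list ys i = count_list xs i"
  have "\<forall>i. count_list ?ys i = count_list xs i"
    by (rule someI[of _ xs]) simp
  then have "mset ?ys = mset xs"
    by (intro multiset_eqI) (simp add: count_mset)
  then show ?thesis
    unfolding partial_def using pdl_mset_eq[OF assms] by blast
qed

lemma mi_norm_count_list: "mi_norm (count_list xs) = length (xs :: 'd::finite list)"
proof (induction xs)
  case (Cons a xs)
  have "mi_norm (count_list (a # xs)) = (\<Sum>i\<in>UNIV. (if a = i then 1 else 0) + count_list xs i)"
    unfolding mi_norm_def by (intro sum.cong) auto
  also have "\<dots> = 1 + mi_norm (count_list xs)"
    unfolding mi_norm_def sum.distrib by simp
  finally show ?case using Cons by (simp del: count_list.simps)
qed (simp add: mi_norm_def)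

section \<open>Polynomial functions\<close>

inductive poly_deg_le :: "nat \<Rightarrow> (real^'d::finite \<Rightarrow> complex) \<Rightarrow> bool" where
  const: "poly_deg_le a (\<lambda>x. c)"
| add: "poly_deg_le a p \<Longrightarrow> poly_deg_le a q \<Longrightarrow> poly_deg_le a (\<lambda>x. p x + q x)"
| coord_mult: "poly_deg_le a p \<Longrightarrow> poly_deg_le (Suc a) (\<lambda>x. of_real (x$i) * p x)"
| mono: "poly_deg_le a p \<Longrightarrow> a \<le> b \<Longrightarrow> poly_deg_le b p"

lemma poly_deg_le_cmult: "poly_deg_le a p \<Longrightarrow> poly_deg_le a (\<lambda>x. c * p x)"
proof (induction rule: poly_deg_le.induct)
  case (add a p q)
  then show ?case
    using poly_deg_le.add[of a "\<lambda>x. c * p x" "\<lambda>x. c * q x"] by (simp add: distrib_left)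
next
  case (coord_mult a p i)
  then show ?case
    using poly_deg_le.coord_mult[of a "\<lambda>x. c * p x" i] by (simp add: algebra_simps)
qed (auto intro: poly_deg_le.intros)

lemma poly_deg_le_mult:
  "poly_deg_le a p \<Longrightarrow> poly_deg_le b q \<Longrightarrow> poly_deg_le (a + b) (\<lambda>x. p x * q x)"
proof (induction rule: poly_deg_le.induct)
  case (const a c)
  then show ?case
    by (metis le_add2 poly_deg_le.mono poly_deg_le_cmult)
next
  case (add a p1 p2)
  then show ?case
    using poly_deg_le.add[of "a+b" "\<lambda>x. p1 x * q x" "\<lambda>x. p2 x * q x"] by (simp add: distrib_right)
next
  case (coord_mult a p i)
  then show ?case
    using poly_deg_le.coord_mult[of "a+b" "\<lambda>x. p x * q x" i] by (simp add: algebra_simps)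
next
  case (mono a p c)
  then show ?case
    by (metis add_le_mono1 poly_deg_le.mono)
qed

lemma poly_deg_le_sum:
  "finite S \<Longrightarrow> (\<And>s. s \<in> S \<Longrightarrow> poly_deg_le a (F s)) \<Longrightarrow> poly_deg_le a (\<lambda>x. \<Sum>s\<in>S. F s x)"
  by (induction rule: finite_induct) (auto intro: poly_deg_le.intros)

lemma poly_deg_le_sum_list:
  "(\<And>s. s \<in> set ss \<Longrightarrow> poly_deg_le a (F s)) \<Longrightarrow> poly_deg_le a (\<lambda>x. \<Sum>s\<leftarrow>ss. F s x)"
  by (induction ss) (auto intro: poly_deg_le.intros)

lemma poly_deg_le_coord: "poly_deg_le 1 (\<lambda>x::real^'d::finite. of_real (x$i))"
  using poly_deg_le.coord_mult[OF poly_deg_le.const[of 0 1], of i] by simp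

lemma has_derivative_coord:
  "((\<lambda>x::real^'d::finite. complex_of_real (x$i)) has_derivative (\<lambda>h. of_real (h$i))) (at y)"
  by (intro bounded_linear_imp_has_derivative bounded_linear_compose[OF bounded_linear_of_real]
      bounded_linear_vec_nth)

lemma pd_coord: "pd j (\<lambda>x::real^'d::finite. complex_of_real (x$i)) y = (if j = i then 1 else 0)"
  using has_derivative_imp_pd[OF has_derivative_coord, of j i y] by (simp add: axis_def)

lemma smooth_fun_coord: "smooth_fun (\<lambda>x::real^'d::finite. complex_of_real (x$i))"
  unfolding smooth_fun_def
proof (intro allI)
  fix "is" :: "'d list" and x
  show "pdl is (\<lambda>x. complex_of_real (x$i)) differentiable (at x)"
  proof (cases "is" rule: rev_exhaust)
    case Nil
    then show ?thesis
      using has_derivative_coord by (auto simp: differentiable_def)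
  next
    case (snoc js j)
    have "pd j (\<lambda>x::real^'d. complex_of_real (x$i)) = (\<lambda>y. if j = i then 1 else 0)"
      by (simp add: fun_eq_iff pd_coord)
    then show ?thesis
      using snoc by (simp add: pdl_append pdl_const)
  qed
qed

lemma poly_deg_le_smooth: "poly_deg_le a p \<Longrightarrow> smooth_fun p"
  by (induction rule: poly_deg_le.induct)
    (auto intro: smooth_fun_const smooth_fun_add smooth_fun_mult smooth_fun_coord)

lemma poly_deg_le_0_const: "poly_deg_le 0 p \<Longrightarrow> \<exists>c. p = (\<lambda>x. c)"
proof (induction "0::nat" p rule: poly_deg_le.induct)
  case (add p q)
  then show ?case by auto
qed auto

lemma pd_coord_mult:
  assumes "smooth_fun p"
  shows "pd i (\<lambda>x. of_real (x$j) * p x) y = (if i = j then p y else 0) + of_real (y$j) * pd i p y"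
  using pd_mult[OF smooth_fun_differentiable[OF smooth_fun_coord]
      smooth_fun_differentiable[OF assms], of i j y]
  by (simp add: pd_coord)

lemma poly_deg_le_pd: "poly_deg_le a p \<Longrightarrow> poly_deg_le (a - 1) (pd i p)"
proof (induction rule: poly_deg_le.induct)
  case (const a c)
  then show ?case by (simp add: pd_const poly_deg_le.const)
next
  case (add a p q)
  have "pd i (\<lambda>x. p x + q x) = (\<lambda>x. pd i p x + pd i q x)"
    using add.hyps by (auto intro!: pd_add smooth_fun_differentiable poly_deg_le_smooth)
  then show ?case
    using add.IH by (simp add: poly_deg_le.add)
next
  case (coord_mult a p j)
  have "poly_deg_le a (\<lambda>x. of_real (x$j) * pd i p x)"
  proof (cases a)
    case 0
    then obtain c where "p = (\<lambda>x. c)"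
      using coord_mult.hyps poly_deg_le_0_const by blast
    then show ?thesis by (simp add: pd_const poly_deg_le.const)
  next
    case (Suc b)
    then show ?thesis
      using coord_mult.IH poly_deg_le.coord_mult[of b "pd i p" j] by simp
  qed
  moreover have "poly_deg_le a (\<lambda>x. if i = j then p x else 0)"
    using coord_mult.hyps by (cases "i = j") (simp_all add: poly_deg_le.const)
  ultimately show ?case
    using poly_deg_le.add pd_coord_mult[OF poly_deg_le_smooth[OF coord_mult.hyps]]
    by fastforce
next
  case (mono a p b)
  then show ?case by (auto intro: poly_deg_le.mono)
qed

definition monomial :: "('d::finite \<Rightarrow> nat) \<Rightarrow> real^'d \<Rightarrow> complex" where
  "monomial \<alpha> x = (\<Prod>i\<in>UNIV. complex_of_real (x $ i) ^ \<alpha> i)"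

lemma mpoly_eval_superset:
  assumes "finite S" "{\<alpha>. c \<alpha> \<noteq> 0} \<subseteq> S"
  shows "mpoly_eval c x = (\<Sum>\<alpha>\<in>S. c \<alpha> * monomial \<alpha> x)"
  unfolding mpoly_eval_def monomial_def
  by (rule sum.mono_neutral_left) (use assms in auto)

lemma mi_norm_fun_upd: "mi_norm (\<alpha>(i := v)) + \<alpha> i = mi_norm \<alpha> + v"
proof -
  have "mi_norm (\<alpha>(i := v)) = v + (\<Sum>j\<in>UNIV - {i}. \<alpha> j)"
    unfolding mi_norm_def by (subst sum.remove[of UNIV i]) (auto intro!: sum.cong)
  moreover have "mi_norm \<alpha> = \<alpha> i + (\<Sum>j\<in>UNIV - {i}. \<alpha> j)"
    unfolding mi_norm_def by (subst sum.remove[of UNIV i]) auto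
  ultimately show ?thesis by simp
qed

lemma monomial_Suc: "monomial (\<alpha>(i := Suc (\<alpha> i))) x = of_real (x $ i) * monomial \<alpha> x"
proof -
  have "monomial (\<alpha>(i := Suc (\<alpha> i))) x
      = of_real (x $ i) ^ Suc (\<alpha> i) * (\<Prod>j\<in>UNIV - {i}. of_real (x $ j) ^ \<alpha> j)"
    unfolding monomial_def by (subst prod.remove[of UNIV i]) (auto intro!: prod.cong)
  moreover have "monomial \<alpha> x = of_real (x $ i) ^ \<alpha> i * (\<Prod>j\<in>UNIV - {i}. of_real (x $ j) ^ \<alpha> j)"
    unfolding monomial_def by (subst prod.remove[of UNIV i]) auto
  ultimately show ?thesis by simp
qed

lemma poly_deg_lt_const: "poly_deg_lt (Suc a) (\<lambda>x::real^'d::finite. c)"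
proof -
  define c0 :: "('d \<Rightarrow> nat) \<Rightarrow> complex" where "c0 = (\<lambda>\<alpha>. if \<alpha> = (\<lambda>_. 0) then c else 0)"
  have supp: "{\<alpha>. c0 \<alpha> \<noteq> 0} \<subseteq> {\<lambda>_. 0}"
    by (auto simp: c0_def split: if_splits)
  have "mpoly_eval c0 x = c" for x
    using mpoly_eval_superset[OF _ supp, of x] by (simp add: c0_def monomial_def)
  moreover have "finite {\<alpha>. c0 \<alpha> \<noteq> 0}"
    using supp finite_subset by blast
  moreover have "\<forall>\<alpha>. Suc a \<le> mi_norm \<alpha> \<longrightarrow> c0 \<alpha> = 0"
    by (auto simp: c0_def mi_norm_def)
  ultimately show ?thesis
    unfolding poly_deg_lt_def by (intro exI[of _ c0]) auto
qed

lemma poly_deg_lt_add: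
  assumes "poly_deg_lt N p" "poly_deg_lt N q"
  shows "poly_deg_lt N (\<lambda>x. p x + q x)"
proof -
  obtain c where c: "finite {\<alpha>. c \<alpha> \<noteq> 0}" "\<forall>\<alpha>. N \<le> mi_norm \<alpha> \<longrightarrow> c \<alpha> = 0" "p = mpoly_eval c"
    using assms(1) unfolding poly_deg_lt_def by blast
  obtain d where d: "finite {\<alpha>. d \<alpha> \<noteq> 0}" "\<forall>\<alpha>. N \<le> mi_norm \<alpha> \<longrightarrow> d \<alpha> = 0" "q = mpoly_eval d"
    using assms(2) unfolding poly_deg_lt_def by blast
  define S where "S = {\<alpha>. c \<alpha> \<noteq> 0} \<union> {\<alpha>. d \<alpha> \<noteq> 0}"
  have S: "finite S" "{\<alpha>. c \<alpha> + d \<alpha> \<noteq> 0} \<subseteq> S"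
    using c d by (auto simp: S_def)
  have "mpoly_eval (\<lambda>\<alpha>. c \<alpha> + d \<alpha>) x = p x + q x" for x
    using mpoly_eval_superset[OF S, of x] mpoly_eval_superset[OF S(1), of c x]
      mpoly_eval_superset[OF S(1), of d x] c d
    by (simp add: S_def sum.distrib distrib_right)
  moreover have "finite {\<alpha>. c \<alpha> + d \<alpha> \<noteq> 0}"
    using S finite_subset by blast
  ultimately show ?thesis
    unfolding poly_deg_lt_def using c d by (intro exI[of _ "\<lambda>\<alpha>. c \<alpha> + d \<alpha>"]) auto
qed

lemma coeff_shift_support:
  "{\<beta>. (if 0 < \<beta> i then c (\<beta>(i := \<beta> i - 1)) else 0) \<noteq> 0} = (\<lambda>\<alpha>. \<alpha>(i := Suc (\<alpha> i))) ` {\<alpha>. c \<alpha> \<noteq> 0}"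
  (is "?L = ?R")
proof
  show "?L \<subseteq> ?R"
  proof
    fix \<beta> assume "\<beta> \<in> ?L"
    then have "0 < \<beta> i" "c (\<beta>(i := \<beta> i - 1)) \<noteq> 0"
      by (auto split: if_splits)
    moreover from this have "\<beta> = (\<beta>(i := \<beta> i - 1))(i := Suc ((\<beta>(i := \<beta> i - 1)) i))"
      by auto
    ultimately show "\<beta> \<in> ?R" by blast
  qed
qed auto

lemma poly_deg_lt_coord_mult:
  assumes "poly_deg_lt N p"
  shows "poly_deg_lt (Suc N) (\<lambda>x. of_real (x $ i) * p x)"
proof -
  obtain c where c: "finite {\<alpha>. c \<alpha> \<noteq> 0}" "\<forall>\<alpha>. N \<le> mi_norm \<alpha> \<longrightarrow> c \<alpha> = 0" "p = mpoly_eval c"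
    using assms(1) unfolding poly_deg_lt_def by blast
  define sh where "sh \<alpha> = \<alpha>(i := Suc (\<alpha> i))" for \<alpha> :: "'a \<Rightarrow> nat"
  define c' where "c' \<beta> = (if 0 < \<beta> i then c (\<beta>(i := \<beta> i - 1)) else 0)" for \<beta>
  have supp: "{\<beta>. c' \<beta> \<noteq> 0} = sh ` {\<alpha>. c \<alpha> \<noteq> 0}"
    unfolding c'_def sh_def by (rule coeff_shift_support)
  have "inj sh"
    unfolding sh_def inj_def by (metis fun_upd_same fun_upd_triv fun_upd_upd old.nat.inject)
  have "mpoly_eval c' x = of_real (x $ i) * p x" for x
  proof -
    have "mpoly_eval c' x = (\<Sum>\<alpha>\<in>{\<alpha>. c \<alpha> \<noteq> 0}. c' (sh \<alpha>) * monomial (sh \<alpha>) x)"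
      using mpoly_eval_superset[of "sh ` {\<alpha>. c \<alpha> \<noteq> 0}" c' x] supp c(1)
        sum.reindex[OF inj_on_subset[OF \<open>inj sh\<close>]] by simp
    also have "\<dots> = (\<Sum>\<alpha>\<in>{\<alpha>. c \<alpha> \<noteq> 0}. of_real (x $ i) * (c \<alpha> * monomial \<alpha> x))"
      by (intro sum.cong) (simp_all add: c'_def sh_def monomial_Suc)
    finally show ?thesis
      using mpoly_eval_superset[OF c(1), of c x] c(3) by (simp add: sum_distrib_left)
  qed
  moreover have "c' \<beta> = 0" if "Suc N \<le> mi_norm \<beta>" for \<beta>
  proof (cases "0 < \<beta> i")
    case True
    have "mi_norm (\<beta>(i := \<beta> i - 1)) + \<beta> i = mi_norm \<beta> + (\<beta> i - 1)"
      by (rule mi_norm_fun_upd)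
    then have "N \<le> mi_norm (\<beta>(i := \<beta> i - 1))"
      using that True by linarith
    then show ?thesis using c(2) by (simp add: c'_def)
  qed (simp add: c'_def)
  ultimately show ?thesis
    unfolding poly_deg_lt_def using supp c(1) by (intro exI[of _ c']) auto
qed

lemma poly_deg_lt_mono: "poly_deg_lt a p \<Longrightarrow> a \<le> b \<Longrightarrow> poly_deg_lt b p"
  unfolding poly_deg_lt_def by (metis order_trans)

lemma poly_deg_le_imp_poly_deg_lt: "poly_deg_le a p \<Longrightarrow> poly_deg_lt (Suc a) p"
  by (induction rule: poly_deg_le.induct)
    (auto intro: poly_deg_lt_const poly_deg_lt_add poly_deg_lt_coord_mult poly_deg_lt_mono)

lemma h_pow_2_eq_sum: "h_pow 2 x = (\<Sum>i\<in>UNIV. of_real (x$i) * of_real (x$i))"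
proof -
  have "norm x ^ 2 = (\<Sum>i\<in>UNIV. x$i * x$i)"
    by (simp add: power2_norm_eq_inner inner_vec_def)
  then show ?thesis unfolding h_pow_def by simp
qed

lemma h_pow_mult: "h_pow a x * h_pow b x = h_pow (a + b) x"
  unfolding h_pow_def by (simp add: power_add)

lemma poly_deg_le_h_pow_2: "poly_deg_le 2 (h_pow 2 :: real^'d::finite \<Rightarrow> complex)"
proof -
  have "poly_deg_le 2 (\<lambda>x::real^'d. \<Sum>i\<in>UNIV. of_real (x$i) * of_real (x$i))"
    using poly_deg_le_mult[OF poly_deg_le_coord poly_deg_le_coord]
    by (intro poly_deg_le_sum) (auto simp: numeral_2_eq_2)
  then show ?thesis
    by (simp add: h_pow_2_eq_sum[abs_def])
qed

lemma smooth_fun_h_pow_2: "smooth_fun (h_pow 2 :: real^'d::finite \<Rightarrow> complex)"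
  by (rule poly_deg_le_smooth[OF poly_deg_le_h_pow_2])

lemma pd_h_pow_2: "pd i (h_pow 2) (y::real^'d::finite) = 2 * of_real (y$i)"
proof -
  have "((\<lambda>x::real^'d. \<Sum>j\<in>UNIV. of_real (x$j) * of_real (x$j)) has_derivative
      (\<lambda>h. \<Sum>j\<in>UNIV. of_real (y$j) * of_real (h$j) + of_real (h$j) * complex_of_real (y$j))) (at y)"
    by (intro has_derivative_sum has_derivative_mult has_derivative_coord)
  from has_derivative_imp_pd[OF this, of i]
  have "pd i (h_pow 2) y = (\<Sum>j\<in>UNIV. of_real (y$j) * of_real (axis i 1 $ j) + of_real (axis i 1 $ j) * of_real (y$j))"
    by (simp add: h_pow_2_eq_sum[abs_def])
  also have "\<dots> = (\<Sum>j\<in>UNIV. if j = i then 2 * of_real (y$i) else 0)"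
    by (rule sum.cong) (auto simp: axis_def)
  finally show ?thesis by simp
qed

section \<open>Differential operators in normal form\<close>

text \<open>A list of pairs \<open>(is, p)\<close> stands for the operator \<open>\<Sum> \<partial>\<^bsup>is\<^esup> M\<^sub>p\<close>, the shape of the
  right-hand side of the theorem.\<close>

type_synonym 'd diff_op = "('d list \<times> (real^'d \<Rightarrow> complex)) list"

definition apply_op :: "'d::finite diff_op \<Rightarrow> (real^'d \<Rightarrow> complex) \<Rightarrow> real^'d \<Rightarrow> complex" where
  "apply_op A f = (\<lambda>x. \<Sum>t\<leftarrow>A. pdl (fst t) (\<lambda>y. snd t y * f y) x)"

definition smooth_coeffs :: "'d::finite diff_op \<Rightarrow> bool" where
  "smooth_coeffs A \<longleftrightarrow> (\<forall>t\<in>set A. smooth_fun (snd t))"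

lemma apply_op_append: "apply_op (A @ B) f x = apply_op A f x + apply_op B f x"
  unfolding apply_op_def by simp

lemma apply_op_concat: "apply_op (concat (map G xs)) f x = (\<Sum>i\<leftarrow>xs. apply_op (G i) f x)"
  by (induction xs) (simp_all add: apply_op_append, simp add: apply_op_def)

lemma smooth_fun_apply_op: "smooth_coeffs A \<Longrightarrow> smooth_fun f \<Longrightarrow> smooth_fun (apply_op A f)"
  unfolding apply_op_def smooth_coeffs_def
  by (auto intro!: smooth_fun_sum_list smooth_fun_pdl smooth_fun_mult)

lemma apply_op_vanishes_on_open:
  assumes "open S" "\<And>y. y \<in> S \<Longrightarrow> f y = 0" "y \<in> S"
  shows "apply_op A f y = 0"
proof -
  have "pdl (fst t) (\<lambda>y. snd t y * f y) y = 0" for t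
    using pdl_vanishes_on_open[OF assms(1) _ assms(3)] assms(2) by simp
  then show ?thesis
    unfolding apply_op_def by (induction A) auto
qed

lemma test_fun_apply_op:
  assumes "test_fun f" "smooth_coeffs A"
  shows "test_fun (apply_op A f)"
proof -
  define K where "K = closure {x. f x \<noteq> 0}"
  have "open (- K)"
    unfolding K_def by (intro open_Compl closed_closure)
  moreover have "\<And>y. y \<in> - K \<Longrightarrow> f y = 0"
    using closure_subset[of "{x. f x \<noteq> 0}"] unfolding K_def by blast
  ultimately have "\<And>y. y \<in> - K \<Longrightarrow> apply_op A f y = 0"
    by (rule apply_op_vanishes_on_open)
  then have supp: "closure {x. apply_op A f x \<noteq> 0} \<subseteq> K"
    unfolding K_def by (intro closure_minimal) auto
  have "compact K" "0 \<notin> K"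
    using assms(1) unfolding test_fun_def K_def by blast+
  then have "compact (K \<inter> closure {x. apply_op A f x \<noteq> 0})"
    by (intro compact_Int_closed) auto
  moreover have "K \<inter> closure {x. apply_op A f x \<noteq> 0} = closure {x. apply_op A f x \<noteq> 0}"
    using supp by blast
  ultimately have "compact (closure {x. apply_op A f x \<noteq> 0})"
    by simp
  moreover have "0 \<notin> closure {x. apply_op A f x \<noteq> 0}"
    using supp \<open>0 \<notin> K\<close> by blast
  moreover have "smooth_fun (apply_op A f)"
    using assms by (intro smooth_fun_apply_op) (auto simp: test_fun_def)
  ultimately show ?thesis
    unfolding test_fun_def by blast
qed

definition op_pd :: "'d::finite \<Rightarrow> 'd diff_op \<Rightarrow> 'd diff_op" where
  "op_pd i A = map (\<lambda>t. (i # fst t, snd t)) A"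

definition op_uminus :: "'d::finite diff_op \<Rightarrow> 'd diff_op" where
  "op_uminus A = map (\<lambda>t. (fst t, \<lambda>x. - snd t x)) A"

lemma smooth_coeffs_op_uminus: "smooth_coeffs A \<Longrightarrow> smooth_coeffs (op_uminus A)"
  unfolding smooth_coeffs_def op_uminus_def by (auto intro: smooth_fun_minus)

lemma sum_list_uminus: "(\<Sum>t\<leftarrow>xs. - F t) = - (\<Sum>t\<leftarrow>xs. F t :: 'a::ab_group_add)"
  by (induction xs) auto

lemma pdl_uminus: "smooth_fun f \<Longrightarrow> pdl is (\<lambda>y. - f y) x = - pdl is f x"
  using pdl_cmult[of f "is" "-1"] by simp

lemma apply_op_pd:
  assumes "smooth_coeffs A" "smooth_fun f"
  shows "apply_op (op_pd i A) f x = pd i (apply_op A f) x"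
  using assms unfolding apply_op_def op_pd_def smooth_coeffs_def
  by (auto simp: comp_def intro!: pd_sum_list[symmetric] smooth_fun_differentiable smooth_fun_pdl
      smooth_fun_mult)

lemma apply_op_uminus:
  assumes "smooth_coeffs A" "smooth_fun f"
  shows "apply_op (op_uminus A) f x = - apply_op A f x"
proof -
  have "pdl (fst t) (\<lambda>y. - snd t y * f y) x = - pdl (fst t) (\<lambda>y. snd t y * f y) x"
    if "t \<in> set A" for t
    using that assms unfolding smooth_coeffs_def by (simp add: pdl_uminus smooth_fun_mult)
  then show ?thesis
    unfolding apply_op_def op_uminus_def by (simp add: comp_def sum_list_uminus cong: map_cong)
qed

text \<open>The recursion is \<open>q \<partial>\<^sub>i g = \<partial>\<^sub>i (q g) - (\<partial>\<^sub>i q) g\<close>.\<close>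

fun mult_pdl_terms :: "(real^'d::finite \<Rightarrow> complex) \<Rightarrow> 'd list \<Rightarrow> 'd diff_op" where
  "mult_pdl_terms q [] = [([], q)]"
| "mult_pdl_terms q (i # ys) = op_pd i (mult_pdl_terms q ys) @ op_uminus (mult_pdl_terms (pd i q) ys)"

lemma smooth_fun_mult_pdl_terms:
  "smooth_fun q \<Longrightarrow> t \<in> set (mult_pdl_terms q ys) \<Longrightarrow> smooth_fun (snd t)"
proof (induction ys arbitrary: q t)
  case (Cons i ys)
  then show ?case
    using Cons.IH[OF Cons.prems(1)] Cons.IH[OF smooth_fun_pd[OF Cons.prems(1)]]
    by (auto intro!: smooth_fun_minus simp: op_pd_def op_uminus_def)
qed simp

lemma smooth_coeffs_mult_pdl_terms: "smooth_fun q \<Longrightarrow> smooth_coeffs (mult_pdl_terms q ys)"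
  unfolding smooth_coeffs_def using smooth_fun_mult_pdl_terms by blast

lemma mult_pdl_terms_eq:
  assumes "smooth_fun q" "smooth_fun g"
  shows "q x * pdl ys g x = apply_op (mult_pdl_terms q ys) g x"
  using assms(1)
proof (induction ys arbitrary: q x)
  case (Cons i ys)
  have coeffs: "smooth_coeffs (mult_pdl_terms q ys)" "smooth_coeffs (mult_pdl_terms (pd i q) ys)"
    using Cons.prems by (auto intro: smooth_coeffs_mult_pdl_terms smooth_fun_pd)
  have "q x * pdl (i # ys) g x = pd i (\<lambda>y. q y * pdl ys g y) x - pd i q x * pdl ys g x"
    using pd_mult[OF smooth_fun_differentiable[OF Cons.prems]
        smooth_fun_differentiable[OF smooth_fun_pdl[OF assms(2)]], of i]
    by simp
  also have "(\<lambda>y. q y * pdl ys g y) = apply_op (mult_pdl_terms q ys) g"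
    using Cons.IH[OF Cons.prems] by auto
  also have "pd i q x * pdl ys g x = apply_op (mult_pdl_terms (pd i q) ys) g x"
    using Cons.IH[OF smooth_fun_pd[OF Cons.prems]] .
  finally show ?case
    using apply_op_pd[OF coeffs(1) assms(2)] apply_op_uminus[OF coeffs(2) assms(2)]
    by (simp add: apply_op_append)
qed (simp add: apply_op_def)

lemma mult_pdl_terms_length:
  "t \<in> set (mult_pdl_terms q ys) \<Longrightarrow>
     length (fst t) \<le> length ys \<and> (length (fst t) = length ys \<longrightarrow> t = (ys, q))"
proof (induction ys arbitrary: q t)
  case (Cons i ys)
  then show ?case by (auto simp: op_pd_def op_uminus_def; fastforce)
qed simp

lemma mult_pdl_terms_zero: "t \<in> set (mult_pdl_terms (\<lambda>_. 0) ys) \<Longrightarrow> snd t = (\<lambda>_. 0)"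
proof (induction ys arbitrary: t)
  case (Cons i ys)
  have "pd i (\<lambda>_::real^'a. 0::complex) = (\<lambda>_. 0)"
    by (simp add: fun_eq_iff pd_const)
  with Cons show ?case by (auto simp: op_pd_def op_uminus_def)
qed simp

text \<open>Each derivative moved past \<open>q\<close> lowers the degree of the coefficient by one.\<close>

lemma mult_pdl_terms_poly_deg:
  assumes "poly_deg_le a q" "t \<in> set (mult_pdl_terms q ys)"
  shows "snd t = (\<lambda>_. 0) \<or>
    (length ys \<le> a + length (fst t) \<and> poly_deg_le (a + length (fst t) - length ys) (snd t))"
  using assms
proof (induction ys arbitrary: q t a)
  case (Cons i ys)
  from Cons.prems(2) consider
      (keep) u where "u \<in> set (mult_pdl_terms q ys)" "t = (i # fst u, snd u)"
    | (moved) u where "u \<in> set (mult_pdl_terms (pd i q) ys)" "t = (fst u, \<lambda>x. - snd u x)"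
    by (auto simp: op_pd_def op_uminus_def)
  then show ?case
  proof cases
    case keep
    then show ?thesis using Cons.IH[OF Cons.prems(1) keep(1)] by auto
  next
    case moved
    show ?thesis
    proof (cases a)
      case 0
      then obtain c where q: "q = (\<lambda>_. c)"
        using Cons.prems(1) poly_deg_le_0_const by blast
      have "pd i q = (\<lambda>_. 0)"
        unfolding q by (rule ext) (rule pd_const)
      then show ?thesis
        using mult_pdl_terms_zero moved by fastforce
    next
      case (Suc b)
      then have "poly_deg_le b (pd i q)"
        using poly_deg_le_pd[OF Cons.prems(1)] by simp
      from Cons.IH[OF this moved(1)] show ?thesis
        using moved(2) Suc poly_deg_le_cmult[of _ "snd u" "-1"] by auto
    qed
  qed
qed simp

definition op_mult :: "(real^'d::finite \<Rightarrow> complex) \<Rightarrow> 'd diff_op \<Rightarrow> 'd diff_op" where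
  "op_mult q A = concat (map (\<lambda>t. map (\<lambda>u. (fst u, \<lambda>x. snd u x * snd t x)) (mult_pdl_terms q (fst t))) A)"

definition univ_list :: "'d::finite list" where
  "univ_list = (SOME xs. distinct xs \<and> set xs = UNIV)"

lemma univ_list: "distinct (univ_list :: 'd::finite list) \<and> set (univ_list :: 'd list) = UNIV"
  unfolding univ_list_def by (rule someI_ex) (use finite_distinct_list[of "UNIV :: 'd set"] in auto)

definition op_laplacian :: "'d::finite diff_op \<Rightarrow> 'd diff_op" where
  "op_laplacian A = concat (map (\<lambda>i. op_pd i (op_pd i A)) univ_list)"

text \<open>\<open>conj_laplacian = U \<Delta> U\<close> on test functions, by \<open>laplacian_U_op\<close> below.\<close>

definition conj_laplacian :: "(real^'d::finite \<Rightarrow> complex) \<Rightarrow> real^'d \<Rightarrow> complex" where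
  "conj_laplacian q = (\<lambda>x. h_pow 2 x * laplacian (\<lambda>y. h_pow 2 y * q y) x)"

definition op_conj_laplacian :: "'d::finite diff_op \<Rightarrow> 'd diff_op" where
  "op_conj_laplacian A = op_mult (h_pow 2) (op_laplacian (op_mult (h_pow 2) A))"

definition op_one_minus_conj_laplacian_pow :: "nat \<Rightarrow> 'd::finite diff_op" where
  "op_one_minus_conj_laplacian_pow n =
     ((\<lambda>A. A @ op_uminus (op_conj_laplacian A)) ^^ n) [([], \<lambda>x. 1)]"

lemma op_one_minus_conj_laplacian_pow_Suc:
  "op_one_minus_conj_laplacian_pow (Suc n) =
     op_one_minus_conj_laplacian_pow n @ op_uminus (op_conj_laplacian (op_one_minus_conj_laplacian_pow n))"
  by (simp add: op_one_minus_conj_laplacian_pow_def)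

lemma smooth_coeffs_op_mult: "smooth_coeffs A \<Longrightarrow> smooth_fun q \<Longrightarrow> smooth_coeffs (op_mult q A)"
  using smooth_coeffs_mult_pdl_terms unfolding smooth_coeffs_def op_mult_def
  by (fastforce intro!: smooth_fun_mult)

lemma smooth_coeffs_op_laplacian: "smooth_coeffs A \<Longrightarrow> smooth_coeffs (op_laplacian A)"
  unfolding smooth_coeffs_def op_laplacian_def op_pd_def by auto

lemma smooth_coeffs_op_conj_laplacian: "smooth_coeffs A \<Longrightarrow> smooth_coeffs (op_conj_laplacian A)"
  unfolding op_conj_laplacian_def
  by (intro smooth_coeffs_op_mult smooth_coeffs_op_laplacian smooth_fun_h_pow_2)

lemma smooth_coeffs_op_one_minus_conj_laplacian_pow:
  "smooth_coeffs (op_one_minus_conj_laplacian_pow n)"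
proof (induction n)
  case (Suc n)
  then show ?case
    using smooth_coeffs_op_uminus[OF smooth_coeffs_op_conj_laplacian[OF Suc]]
    by (simp add: op_one_minus_conj_laplacian_pow_Suc smooth_coeffs_def ball_Un)
qed (simp add: op_one_minus_conj_laplacian_pow_def smooth_coeffs_def smooth_fun_const)

lemma apply_op_mult:
  assumes "smooth_coeffs A" "smooth_fun q" "smooth_fun f"
  shows "apply_op (op_mult q A) f x = q x * apply_op A f x"
  using assms(1)
proof (induction A)
  case (Cons t A)
  then have "smooth_fun (snd t)" "smooth_coeffs A"
    by (auto simp: smooth_coeffs_def)
  have "apply_op (map (\<lambda>u. (fst u, \<lambda>x. snd u x * snd t x)) (mult_pdl_terms q (fst t))) f x
      = q x * pdl (fst t) (\<lambda>y. snd t y * f y) x"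
    using mult_pdl_terms_eq[OF assms(2) smooth_fun_mult[OF \<open>smooth_fun (snd t)\<close> assms(3)], of x "fst t"]
    unfolding apply_op_def by (simp add: comp_def mult.assoc)
  moreover have "op_mult q (t # A)
      = map (\<lambda>u. (fst u, \<lambda>x. snd u x * snd t x)) (mult_pdl_terms q (fst t)) @ op_mult q A"
    by (simp add: op_mult_def)
  ultimately show ?case
    using Cons.IH[OF \<open>smooth_coeffs A\<close>]
    by (simp add: apply_op_append apply_op_def distrib_left)
qed (simp add: apply_op_def op_mult_def)

lemma apply_op_laplacian:
  assumes "smooth_coeffs A" "smooth_fun f"
  shows "apply_op (op_laplacian A) f x = laplacian (apply_op A f) x"
proof -
  have "apply_op (op_pd i (op_pd i A)) f x = pd i (pd i (apply_op A f)) x" for i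
  proof -
    have "smooth_coeffs (op_pd i A)"
      using assms(1) by (simp add: smooth_coeffs_def op_pd_def)
    moreover have "apply_op (op_pd i A) f = pd i (apply_op A f)"
      using apply_op_pd[OF assms] by auto
    ultimately show ?thesis
      using apply_op_pd[OF _ assms(2)] by simp
  qed
  then have "apply_op (op_laplacian A) f x = (\<Sum>i\<leftarrow>univ_list. pd i (pd i (apply_op A f)) x)"
    unfolding op_laplacian_def apply_op_concat by simp
  also have "\<dots> = laplacian (apply_op A f) x"
    using univ_list unfolding laplacian_def by (metis sum_list_distinct_conv_sum_set)
  finally show ?thesis .
qed

lemma apply_op_conj_laplacian:
  assumes "smooth_coeffs A" "smooth_fun f"
  shows "apply_op (op_conj_laplacian A) f x = conj_laplacian (apply_op A f) x"
proof -
  have "smooth_coeffs (op_mult (h_pow 2) A)"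
    by (rule smooth_coeffs_op_mult[OF assms(1) smooth_fun_h_pow_2])
  moreover have "apply_op (op_mult (h_pow 2) A) f = (\<lambda>y. h_pow 2 y * apply_op A f y)"
    using apply_op_mult[OF assms(1) smooth_fun_h_pow_2 assms(2)] by auto
  ultimately show ?thesis
    unfolding op_conj_laplacian_def conj_laplacian_def
    using apply_op_mult[OF smooth_coeffs_op_laplacian smooth_fun_h_pow_2 assms(2)]
      apply_op_laplacian[OF _ assms(2)]
    by simp
qed

lemma apply_op_one_minus_conj_laplacian_pow_0:
  "apply_op (op_one_minus_conj_laplacian_pow 0) f x = f x"
  by (simp add: op_one_minus_conj_laplacian_pow_def apply_op_def)

lemma apply_op_one_minus_conj_laplacian_pow_Suc:
  assumes "smooth_fun f"
  shows "apply_op (op_one_minus_conj_laplacian_pow (Suc n)) f x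
    = apply_op (op_one_minus_conj_laplacian_pow n) f x
      - conj_laplacian (apply_op (op_one_minus_conj_laplacian_pow n) f) x"
  using apply_op_uminus[OF smooth_coeffs_op_conj_laplacian assms]
    apply_op_conj_laplacian[OF _ assms] smooth_coeffs_op_one_minus_conj_laplacian_pow[of n]
  by (simp add: op_one_minus_conj_laplacian_pow_Suc apply_op_append)

definition op_coeffs_deg_le :: "nat \<Rightarrow> 'd::finite diff_op \<Rightarrow> bool" where
  "op_coeffs_deg_le W A \<longleftrightarrow> (\<forall>t\<in>set A. poly_deg_le (W + length (fst t)) (snd t))"

lemma op_coeffs_deg_le_mult:
  assumes "op_coeffs_deg_le W A" "poly_deg_le a q"
  shows "op_coeffs_deg_le (W + a) (op_mult q A)"
  unfolding op_coeffs_deg_le_def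
proof
  fix v assume "v \<in> set (op_mult q A)"
  then obtain t u where t: "t \<in> set A" and u: "u \<in> set (mult_pdl_terms q (fst t))"
    and v: "v = (fst u, \<lambda>x. snd u x * snd t x)"
    unfolding op_mult_def by auto
  have "poly_deg_le (W + length (fst t)) (snd t)"
    using assms(1) t unfolding op_coeffs_deg_le_def by blast
  with mult_pdl_terms_poly_deg[OF assms(2) u] show "poly_deg_le (W + a + length (fst v)) (snd v)"
  proof (elim disjE conjE)
    assume "snd u = (\<lambda>_. 0)"
    then show ?thesis using v by (simp add: poly_deg_le.const)
  next
    assume "length (fst t) \<le> a + length (fst u)"
      and "poly_deg_le (a + length (fst u) - length (fst t)) (snd u)"
      and "poly_deg_le (W + length (fst t)) (snd t)"
    from poly_deg_le_mult[OF this(2,3)]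
    have "poly_deg_le (a + length (fst u) - length (fst t) + (W + length (fst t))) (\<lambda>x. snd u x * snd t x)" .
    moreover have "a + length (fst u) - length (fst t) + (W + length (fst t)) = W + a + length (fst v)"
      using \<open>length (fst t) \<le> a + length (fst u)\<close> v by simp
    ultimately show ?thesis
      using v by simp
  qed
qed

lemma op_coeffs_deg_le_mono: "op_coeffs_deg_le W A \<Longrightarrow> W \<le> W' \<Longrightarrow> op_coeffs_deg_le W' A"
  unfolding op_coeffs_deg_le_def using poly_deg_le.mono add_le_mono1 by blast

lemma op_coeffs_deg_le_uminus: "op_coeffs_deg_le W A \<Longrightarrow> op_coeffs_deg_le W (op_uminus A)"
  unfolding op_coeffs_deg_le_def op_uminus_def using poly_deg_le_cmult[of _ _ "-1"] by auto

lemma op_coeffs_deg_le_laplacian: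
  "op_coeffs_deg_le (W + 2) A \<Longrightarrow> op_coeffs_deg_le W (op_laplacian A)"
  unfolding op_coeffs_deg_le_def op_laplacian_def op_pd_def by auto

lemma op_coeffs_deg_le_conj_laplacian:
  "op_coeffs_deg_le W A \<Longrightarrow> op_coeffs_deg_le (W + 2) (op_conj_laplacian A)"
  unfolding op_conj_laplacian_def
  using op_coeffs_deg_le_mult op_coeffs_deg_le_laplacian poly_deg_le_h_pow_2 by metis

lemma op_coeffs_deg_le_pow:
  "op_coeffs_deg_le (2 * n) (op_one_minus_conj_laplacian_pow n :: 'd::finite diff_op)"
proof (induction n)
  case (Suc n)
  have "op_coeffs_deg_le (2 * n + 2) (op_one_minus_conj_laplacian_pow n :: 'd diff_op)"
    by (rule op_coeffs_deg_le_mono[OF Suc]) simp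
  moreover have "op_coeffs_deg_le (2 * n + 2)
      (op_uminus (op_conj_laplacian (op_one_minus_conj_laplacian_pow n :: 'd diff_op)))"
    by (intro op_coeffs_deg_le_uminus op_coeffs_deg_le_conj_laplacian Suc)
  moreover have "2 * Suc n = 2 * n + 2"
    by simp
  ultimately show ?case
    by (simp only: op_one_minus_conj_laplacian_pow_Suc op_coeffs_deg_le_def set_append ball_Un)
qed (simp add: op_one_minus_conj_laplacian_pow_def op_coeffs_deg_le_def poly_deg_le.const)

definition op_top_order_h_pow :: "nat \<Rightarrow> nat \<Rightarrow> 'd::finite diff_op \<Rightarrow> bool" where
  "op_top_order_h_pow B e A \<longleftrightarrow> (\<forall>t\<in>set A. length (fst t) \<le> B \<and>
     (length (fst t) = B \<longrightarrow> (\<exists>c. snd t = (\<lambda>x. c * h_pow e x))))"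

lemma op_top_order_h_pow_mult:
  assumes "op_top_order_h_pow B e A"
  shows "op_top_order_h_pow B (e + 2) (op_mult (h_pow 2) A)"
  unfolding op_top_order_h_pow_def
proof
  fix v assume "v \<in> set (op_mult (h_pow 2) A)"
  then obtain t u where t: "t \<in> set A" and u: "u \<in> set (mult_pdl_terms (h_pow 2) (fst t))"
    and v: "v = (fst u, \<lambda>x. snd u x * snd t x)"
    unfolding op_mult_def by auto
  have t_top: "length (fst t) \<le> B" "length (fst t) = B \<longrightarrow> (\<exists>c. snd t = (\<lambda>x. c * h_pow e x))"
    using assms t unfolding op_top_order_h_pow_def by auto
  have u_top: "length (fst u) \<le> length (fst t)" "length (fst u) = length (fst t) \<longrightarrow> u = (fst t, h_pow 2)"
    using mult_pdl_terms_length[OF u] by auto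
  show "length (fst v) \<le> B \<and> (length (fst v) = B \<longrightarrow> (\<exists>c. snd v = (\<lambda>x. c * h_pow (e + 2) x)))"
  proof (intro conjI impI)
    show "length (fst v) \<le> B"
      using t_top u_top v by simp
    assume "length (fst v) = B"
    then obtain c where "snd t = (\<lambda>x. c * h_pow e x)" "u = (fst t, h_pow 2)"
      using t_top u_top v by auto
    then have "snd v = (\<lambda>x. c * (h_pow e x * h_pow 2 x))"
      using v by (auto simp: algebra_simps)
    then show "\<exists>c. snd v = (\<lambda>x. c * h_pow (e + 2) x)"
      by (auto simp only: h_pow_mult)
  qed
qed

lemma op_top_order_h_pow_laplacian:
  "op_top_order_h_pow B e A \<Longrightarrow> op_top_order_h_pow (B + 2) e (op_laplacian A)"
  unfolding op_top_order_h_pow_def op_laplacian_def op_pd_def by auto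

lemma op_top_order_h_pow_conj_laplacian:
  assumes "op_top_order_h_pow B e A"
  shows "op_top_order_h_pow (B + 2) (e + 4) (op_conj_laplacian A)"
proof -
  have "op_top_order_h_pow (B + 2) (e + 2) (op_laplacian (op_mult (h_pow 2) A))"
    by (intro op_top_order_h_pow_laplacian op_top_order_h_pow_mult assms)
  then have "op_top_order_h_pow (B + 2) (e + 2 + 2) (op_conj_laplacian A)"
    unfolding op_conj_laplacian_def by (rule op_top_order_h_pow_mult)
  moreover have "e + 2 + 2 = e + 4"
    by simp
  ultimately show ?thesis
    by metis
qed

lemma op_top_order_h_pow_uminus:
  assumes "op_top_order_h_pow B e A"
  shows "op_top_order_h_pow B e (op_uminus A)"
proof -
  have "\<exists>c'. (\<lambda>x. - p x) = (\<lambda>x. c' * h_pow e x)" if p_eq: "\<exists>c. p = (\<lambda>x. c * h_pow e x)" for p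
  proof -
    obtain c where "p = (\<lambda>x. c * h_pow e x)"
      using p_eq by blast
    then have "(\<lambda>x. - p x) = (\<lambda>x. (- c) * h_pow e x)"
      by simp
    then show ?thesis by blast
  qed
  with assms show ?thesis
    unfolding op_top_order_h_pow_def op_uminus_def by auto
qed

lemma op_top_order_h_pow_pow:
  "op_top_order_h_pow (2 * n) (4 * n) (op_one_minus_conj_laplacian_pow n :: 'd::finite diff_op)"
proof (induction n)
  case 0
  have "\<exists>c. (\<lambda>x::real^'d. 1::complex) = (\<lambda>x. c * h_pow 0 x)"
    by (intro exI[of _ 1]) (simp add: h_pow_def)
  then show ?case
    unfolding op_one_minus_conj_laplacian_pow_def op_top_order_h_pow_def by auto
next
  case (Suc n)
  have "op_top_order_h_pow (2 * n + 2) (4 * n + 4)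
      (op_uminus (op_conj_laplacian (op_one_minus_conj_laplacian_pow n :: 'd diff_op)))"
    by (intro op_top_order_h_pow_uminus op_top_order_h_pow_conj_laplacian Suc)
  moreover have "\<forall>t\<in>set (op_one_minus_conj_laplacian_pow n :: 'd diff_op). length (fst t) < 2 * n + 2"
    using Suc unfolding op_top_order_h_pow_def by auto
  moreover have "2 * Suc n = 2 * n + 2" "4 * Suc n = 4 * n + 4"
    by simp_all
  ultimately show ?case
    unfolding op_top_order_h_pow_def op_one_minus_conj_laplacian_pow_Suc set_append ball_Un
    by (metis less_not_refl order_less_imp_le)
qed

section \<open>The inversion \<open>U\<close>\<close>

lemma U_op_eq_powr:
  fixes q :: "real^'d::finite \<Rightarrow> complex"
  assumes "y \<noteq> 0"
  shows "U_op q y = of_real ((norm y ^ 2) powr (- real CARD('d) / 2)) * q ((1 / norm y ^ 2) *\<^sub>R y)"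
proof -
  have "norm y ^ 2 = norm y powr 2"
    using assms by simp
  then have "(norm y ^ 2) powr (- real CARD('d) / 2) = norm y powr (2 * (- real CARD('d) / 2))"
    by (simp only: powr_powr)
  then show ?thesis
    unfolding U_op_def by simp
qed

lemma U_op_U_op:
  fixes x :: "real^'d::finite"
  assumes "x \<noteq> 0"
  shows "U_op (U_op g) x = g x"
proof -
  define y where "y = (1 / (norm x)\<^sup>2) *\<^sub>R x"
  have nx: "norm x > 0"
    using assms by simp
  have ny: "norm y = 1 / norm x"
    unfolding y_def using nx by (simp add: power2_eq_square)
  have "(1 / (norm y)\<^sup>2) *\<^sub>R y = x"
    unfolding ny unfolding y_def using nx by (simp add: power2_eq_square)
  moreover have "norm x powr (- real CARD('d)) * norm y powr (- real CARD('d)) = 1"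
    using nx by (simp add: powr_mult[symmetric] ny)
  ultimately show ?thesis
    unfolding U_op_def y_def[symmetric] by (simp add: mult.assoc[symmetric] of_real_mult[symmetric])
qed

lemma U_op_vanishes_near_0:
  fixes q :: "real^'d::finite \<Rightarrow> complex"
  assumes "test_fun q"
  obtains r where "r > 0" "\<And>y. y \<in> ball 0 r \<Longrightarrow> U_op q y = 0"
proof -
  have "bounded (closure {x. q x \<noteq> 0})"
    using assms unfolding test_fun_def by (simp add: compact_imp_bounded)
  then obtain R where R: "R > 0" "\<And>z. z \<in> closure {x. q x \<noteq> 0} \<Longrightarrow> norm z \<le> R"
    unfolding bounded_pos by blast
  have "q z = 0" if "norm z > R" for z
    using R(2)[of z] closure_subset[of "{x. q x \<noteq> 0}"] that by force
  then have "U_op q y = 0" if "y \<in> ball 0 (1/R)" for y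
  proof (cases "y = 0")
    case False
    then have "R < 1 / norm y"
      using that R(1) by (simp add: field_simps)
    moreover have "norm ((1 / (norm y)\<^sup>2) *\<^sub>R y) = 1 / norm y"
      using False by (simp add: power2_eq_square)
    ultimately show ?thesis
      using \<open>\<And>z. norm z > R \<Longrightarrow> q z = 0\<close> by (simp add: U_op_def)
  qed (simp add: U_op_def)
  moreover have "1/R > 0"
    using R by simp
  ultimately show ?thesis
    using that by blast
qed

lemma has_vector_derivative_shift:
  assumes "(\<phi> has_vector_derivative D) (at s)"
  shows "((\<lambda>t. \<phi> (s + t)) has_vector_derivative D) (at 0)"
proof -
  have "((\<lambda>t::real. s + t) has_derivative (\<lambda>h. h)) (at 0)"
    by (auto intro!: derivative_eq_intros)
  from has_derivative_compose[OF this] assms show ?thesis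
    by (simp add: has_vector_derivative_def)
qed

lemma pd_pd_eq_line_derivative:
  fixes F :: "real^'d::finite \<Rightarrow> complex"
  assumes "0 < \<delta>"
    and "\<And>s. \<bar>s\<bar> < \<delta> \<Longrightarrow> ((\<lambda>t. F (x + t *\<^sub>R axis i 1)) has_vector_derivative \<phi>1 s) (at s)"
    and "(\<phi>1 has_vector_derivative \<phi>2) (at 0)"
  shows "pd i (pd i F) x = \<phi>2"
proof -
  have "pd i F (x + s *\<^sub>R axis i 1) = \<phi>1 s" if "\<bar>s\<bar> < \<delta>" for s
  proof -
    have "(\<lambda>t. F (x + s *\<^sub>R axis i 1 + t *\<^sub>R axis i 1)) = (\<lambda>t. F (x + (s + t) *\<^sub>R axis i 1))"
      by (simp add: scaleR_add_left add.assoc)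
    with has_vector_derivative_shift[OF assms(2)[OF that]] show ?thesis
      unfolding pd_def by (simp add: vector_derivative_at)
  qed
  then have "((\<lambda>s. pd i F (x + s *\<^sub>R axis i 1)) has_vector_derivative \<phi>2) (at 0)"
    by (intro has_vector_derivative_transform_within_open[OF assms(3), of "ball 0 \<delta>"])
      (use assms(1) in auto)
  then show ?thesis
    by (simp add: pd_def vector_derivative_at)
qed

lemma pd_pd_weighted_comp:
  fixes q F :: "real^'d::finite \<Rightarrow> complex"
  assumes q: "smooth_fun q" and "0 < \<delta>"
    and F: "\<And>t. \<bar>t\<bar> < \<delta> \<Longrightarrow> F (x + t *\<^sub>R axis i 1) = of_real (w t) * q (c t)"
    and w: "\<And>t. \<bar>t\<bar> < \<delta> \<Longrightarrow> (w has_real_derivative w' t) (at t)"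
    and c: "\<And>t. \<bar>t\<bar> < \<delta> \<Longrightarrow> (c has_vector_derivative c' t) (at t)"
    and w': "(w' has_real_derivative w'') (at 0)"
    and c': "\<And>k. ((\<lambda>t. c' t $ k) has_real_derivative c'' k) (at 0)"
  shows "pd i (pd i F) x =
      of_real w'' * q (c 0)
    + 2 * of_real (w' 0) * (\<Sum>k\<in>UNIV. of_real (c' 0 $ k) * pd k q (c 0))
    + of_real (w 0) * (\<Sum>k\<in>UNIV. of_real (c' 0 $ k) * (\<Sum>l\<in>UNIV. of_real (c' 0 $ l) * pd l (pd k q) (c 0))
        + of_real (c'' k) * pd k q (c 0))"
proof -
  have dq: "q differentiable (at y)" and dG: "pd k q differentiable (at y)" for k y
    using q by (auto intro: smooth_fun_differentiable smooth_fun_pd)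
  define \<phi>1 where "\<phi>1 t = of_real (w' t) * q (c t)
    + of_real (w t) * (\<Sum>k\<in>UNIV. of_real (c' t $ k) * pd k q (c t))" for t
  have "((\<lambda>t. F (x + t *\<^sub>R axis i 1)) has_vector_derivative \<phi>1 s) (at s)" if "\<bar>s\<bar> < \<delta>" for s
  proof -
    have "((\<lambda>t. of_real (w t) * q (c t)) has_vector_derivative \<phi>1 s) (at s)"
      unfolding \<phi>1_def using that
      by (auto intro!: has_vector_derivative_mult[THEN has_vector_derivative_eq_rhs]
          has_vector_derivative_of_real has_vector_derivative_comp_pd w c dq)
    then show ?thesis
      by (rule has_vector_derivative_transform_within_open[of _ _ _ "ball 0 \<delta>"])
        (use that F in auto)
  qed
  moreover have "(\<phi>1 has_vector_derivative
      of_real (w' 0) * (\<Sum>k\<in>UNIV. of_real (c' 0 $ k) * pd k q (c 0)) + of_real w'' * q (c 0)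
      + (of_real (w 0) * (\<Sum>k\<in>UNIV. of_real (c' 0 $ k) * (\<Sum>l\<in>UNIV. of_real (c' 0 $ l) * pd l (pd k q) (c 0))
           + of_real (c'' k) * pd k q (c 0))
         + of_real (w' 0) * (\<Sum>k\<in>UNIV. of_real (c' 0 $ k) * pd k q (c 0)))) (at 0)"
    unfolding \<phi>1_def using \<open>0 < \<delta>\<close>
    by (intro has_vector_derivative_add has_vector_derivative_mult has_vector_derivative_of_real
        has_vector_derivative_sum has_vector_derivative_comp_pd w w' c c' dq dG) auto
  ultimately show ?thesis
    by (subst pd_pd_eq_line_derivative[OF \<open>0 < \<delta>\<close>]) (auto simp: algebra_simps)
qed

lemma norm_add_scaleR_axis_power2:
  fixes x :: "real^'d::finite"
  shows "norm (x + t *\<^sub>R axis i 1) ^ 2 = norm x ^ 2 + 2 * t * (x$i) + t^2"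
proof -
  have "norm (x + t *\<^sub>R axis i 1) ^ 2 = (x + t *\<^sub>R axis i 1) \<bullet> (x + t *\<^sub>R axis i 1)"
    by (simp add: power2_norm_eq_inner)
  also have "\<dots> = x \<bullet> x + 2 * t * (x \<bullet> axis i 1) + t^2 * (axis i 1 \<bullet> axis i (1::real))"
    by (simp add: inner_add_left inner_add_right inner_commute power2_eq_square algebra_simps)
  finally show ?thesis
    by (simp add: inner_axis inner_axis_axis power2_norm_eq_inner)
qed

lemma has_real_derivative_quadratic_powr:
  assumes "r2 + 2*t*xi + t^2 > 0"
  shows "((\<lambda>t. (r2 + 2*t*xi + t^2) powr e) has_real_derivative
    e * (r2 + 2*t*xi + t^2) powr (e - 1) * (2*xi + 2*t)) (at t)"
proof -
  have "((\<lambda>t. r2 + 2*t*xi + t^2) has_real_derivative 2*xi + 2*t) (at t)"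
    by (auto intro!: derivative_eq_intros)
  from DERIV_chain2[OF has_real_derivative_powr[OF assms, of e] this] show ?thesis
    by simp
qed

lemma has_real_derivative_quadratic_powr_deriv_0:
  assumes "r2 > 0"
  shows "((\<lambda>t. e * (r2 + 2*t*xi + t^2) powr (e - 1) * (2*xi + 2*t)) has_real_derivative
      e * ((e - 1) * r2 powr (e - 2) * (2*xi) * (2*xi) + r2 powr (e - 1) * 2)) (at 0)"
proof -
  have "r2 + 2*0*xi + 0^2 > 0"
    using assms by simp
  from has_real_derivative_quadratic_powr[OF this, of "e - 1"]
  have "((\<lambda>t. e * ((r2 + 2*t*xi + t^2) powr (e - 1) * (2*xi + 2*t))) has_real_derivative
      e * ((e - 1) * r2 powr (e - 1 - 1) * (2*xi) * (2*xi) + r2 powr (e - 1) * 2)) (at 0)"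
    by (intro DERIV_cmult DERIV_mult'[THEN DERIV_cong]) (auto intro!: derivative_eq_intros)
  then show ?thesis
    by (simp add: mult.assoc)
qed

lemma has_real_derivative_inversion_line_deriv_0:
  assumes "r2 > 0"
  shows "((\<lambda>t. (1/(r2 + 2*t*xi + t^2)) * ak + (- (2*xi + 2*t) / (r2 + 2*t*xi + t^2)^2) * (xk + t*ak))
     has_real_derivative (-4*xi*ak/r2^2 + (8*xi^2/r2^3 - 2/r2^2)*xk)) (at 0)"
  using assms
  by (auto intro!: derivative_eq_intros simp: field_simps power2_eq_square power3_eq_cube)

lemma has_vector_derivative_inversion_line:
  assumes "r2 + 2*t*xi + t^2 > 0"
  shows "((\<lambda>t. (1 / (r2 + 2*t*xi + t^2)) *\<^sub>R (x + t *\<^sub>R a)) has_vector_derivative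
    (1 / (r2 + 2*t*xi + t^2)) *\<^sub>R a + (- (2*xi + 2*t) / (r2 + 2*t*xi + t^2)^2) *\<^sub>R (x + t *\<^sub>R a)) (at t)"
proof -
  have "((\<lambda>t. 1 / (r2 + 2*t*xi + t^2)) has_real_derivative (- (2*xi + 2*t) / (r2 + 2*t*xi + t^2)^2)) (at t)"
    using assms by (auto intro!: derivative_eq_intros simp: power2_eq_square)
  moreover have "((\<lambda>t. x + t *\<^sub>R a) has_vector_derivative a) (at t)"
    by (auto intro!: derivative_eq_intros)
  ultimately show ?thesis
    by (rule has_vector_derivative_scaleR[THEN has_vector_derivative_eq_rhs]) simp
qed

lemma powr_minus_half_derivs_at_0:
  fixes r2 d :: real
  assumes "r2 > 0"
  defines "w0 \<equiv> r2 powr (- d / 2)"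
  shows "- d / 2 * r2 powr (- d / 2 - 1) * (2*xi + 2*0) = - d * xi * w0 / r2"
    and "- d / 2 * ((- d / 2 - 1) * r2 powr (- d / 2 - 2) * (2*xi) * (2*xi) + r2 powr (- d / 2 - 1) * 2)
      = w0 * (d*(d+2)*xi^2/r2^2 - d/r2)"
proof -
  have powr_1: "r2 powr (- d / 2 - 1) = w0 / r2"
    using assms by (simp add: powr_diff)
  have "- d / 2 - 2 = (- d / 2 - 1) - 1"
    by simp
  with powr_1 have powr_2: "r2 powr (- d / 2 - 2) = w0 / r2^2"
    using assms(1) by (simp only: powr_diff) (simp add: power2_eq_square)
  show "- d / 2 * r2 powr (- d / 2 - 1) * (2*xi + 2*0) = - d * xi * w0 / r2"
    and "- d / 2 * ((- d / 2 - 1) * r2 powr (- d / 2 - 2) * (2*xi) * (2*xi) + r2 powr (- d / 2 - 1) * 2)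
      = w0 * (d*(d+2)*xi^2/r2^2 - d/r2)"
    unfolding powr_1 powr_2 using assms(1) by (simp_all add: field_simps power2_eq_square)
qed

lemma U_op_along_axis:
  fixes q :: "real^'d::finite \<Rightarrow> complex" and i :: 'd
  assumes "\<bar>t\<bar> < norm x"
  defines "N \<equiv> norm x ^ 2 + 2*t*(x$i) + t^2"
  shows "N > 0"
    and "U_op q (x + t *\<^sub>R axis i 1) = of_real (N powr (- real CARD('d) / 2)) * q ((1 / N) *\<^sub>R (x + t *\<^sub>R axis i 1))"
proof -
  have "x + t *\<^sub>R axis i 1 \<noteq> 0"
  proof
    assume "x + t *\<^sub>R axis i 1 = 0"
    then have "x = - (t *\<^sub>R axis i 1)"
      by (simp add: eq_neg_iff_add_eq_0)
    with assms show False by simp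
  qed
  moreover have "norm (x + t *\<^sub>R axis i 1) ^ 2 = N"
    unfolding N_def by (rule norm_add_scaleR_axis_power2)
  ultimately show "N > 0" "U_op q (x + t *\<^sub>R axis i 1)
      = of_real (N powr (- real CARD('d) / 2)) * q ((1 / N) *\<^sub>R (x + t *\<^sub>R axis i 1))"
    using U_op_eq_powr[of "x + t *\<^sub>R axis i 1" q] by auto
qed

text \<open>Along the line \<open>x + t e\<^sub>i\<close> we have \<open>U q = w t * q (c t)\<close> with \<open>w t = N t powr (-d/2)\<close>,
  \<open>c t = (x + t e\<^sub>i) / N t\<close> and \<open>N t = |x + t e\<^sub>i|\<^sup>2\<close>. At \<open>t = 0\<close>, \<open>J k\<close> is row \<open>i\<close> of the Jacobian
  of the inversion \<open>y \<mapsto> y / |y|\<^sup>2\<close> at \<open>x\<close> and \<open>J' k\<close> its derivative in direction \<open>e\<^sub>i\<close>.\<close>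

lemma pd_pd_U_op:
  fixes q :: "real^'d::finite \<Rightarrow> complex" and x :: "real^'d" and i :: 'd
  assumes q: "smooth_fun q" and "x \<noteq> 0"
  defines "r2 \<equiv> norm x ^ 2" and "d \<equiv> real CARD('d)" and "xi \<equiv> x $ i"
  defines "w0 \<equiv> r2 powr (- d / 2)" and "c0 \<equiv> (1 / r2) *\<^sub>R x"
  defines "J \<equiv> (\<lambda>k. (if k = i then 1 else 0) / r2 - 2 * xi * x$k / r2^2)"
  defines "J' \<equiv> (\<lambda>k. -4 * xi * (if k = i then 1 else 0) / r2^2 + (8*xi^2/r2^3 - 2/r2^2) * x$k)"
  shows "pd i (pd i (U_op q)) x =
      of_real (w0 * (d*(d+2)*xi^2/r2^2 - d/r2)) * q c0
    + 2 * of_real (- d * xi * w0 / r2) * (\<Sum>k\<in>UNIV. of_real (J k) * pd k q c0)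
    + of_real w0 * (\<Sum>k\<in>UNIV. of_real (J k) * (\<Sum>l\<in>UNIV. of_real (J l) * pd l (pd k q) c0)
        + of_real (J' k) * pd k q c0)"
proof -
  define N where "N t = r2 + 2*t*xi + t^2" for t :: real
  define w where "w t = N t powr (- d / 2)" for t
  define w' where "w' t = - d / 2 * N t powr (- d / 2 - 1) * (2*xi + 2*t)" for t
  define c where "c t = (1 / N t) *\<^sub>R (x + t *\<^sub>R axis i 1)" for t
  define c' where "c' t = (1 / N t) *\<^sub>R axis i 1 + (- (2*xi + 2*t) / (N t)^2) *\<^sub>R (x + t *\<^sub>R axis i 1)"
    for t
  have r2: "r2 > 0"
    using \<open>x \<noteq> 0\<close> by (simp add: r2_def)
  have N_pos: "N t > 0" and "U_op q (x + t *\<^sub>R axis i 1) = of_real (w t) * q (c t)"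
    if "\<bar>t\<bar> < norm x" for t
    using U_op_along_axis[OF that] unfolding N_def w_def c_def r2_def xi_def d_def by auto
  moreover have "(w has_real_derivative w' t) (at t)" if "\<bar>t\<bar> < norm x" for t
    using has_real_derivative_quadratic_powr N_pos[OF that] unfolding w_def w'_def N_def by blast
  moreover have "(c has_vector_derivative c' t) (at t)" if "\<bar>t\<bar> < norm x" for t
    using has_vector_derivative_inversion_line N_pos[OF that] unfolding c_def c'_def N_def by blast
  moreover have "(w' has_real_derivative
      - d / 2 * ((- d / 2 - 1) * r2 powr (- d / 2 - 2) * (2*xi) * (2*xi) + r2 powr (- d / 2 - 1) * 2)) (at 0)"
    using has_real_derivative_quadratic_powr_deriv_0[OF r2, of "- d / 2" xi]
    unfolding w'_def N_def by (simp add: diff_diff_eq)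
  moreover have "((\<lambda>t. c' t $ k) has_real_derivative J' k) (at 0)" for k
  proof -
    have "(\<lambda>t. c' t $ k) = (\<lambda>t. (1/(r2 + 2*t*xi + t^2)) * (axis i 1 $ k)
        + (- (2*xi + 2*t) / (r2 + 2*t*xi + t^2)^2) * (x$k + t*(axis i 1 $ k)))"
      by (simp add: c'_def N_def fun_eq_iff)
    then show ?thesis
      using has_real_derivative_inversion_line_deriv_0[OF r2, of xi "axis i 1 $ k" "x$k"]
      by (simp add: J'_def axis_def)
  qed
  ultimately have main: "pd i (pd i (U_op q)) x =
      of_real (- d / 2 * ((- d / 2 - 1) * r2 powr (- d / 2 - 2) * (2*xi) * (2*xi) + r2 powr (- d / 2 - 1) * 2))
        * q (c 0)
    + 2 * of_real (w' 0) * (\<Sum>k\<in>UNIV. of_real (c' 0 $ k) * pd k q (c 0))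
    + of_real (w 0) * (\<Sum>k\<in>UNIV. of_real (c' 0 $ k) * (\<Sum>l\<in>UNIV. of_real (c' 0 $ l) * pd l (pd k q) (c 0))
        + of_real (J' k) * pd k q (c 0))"
    by (intro pd_pd_weighted_comp[OF q, of "norm x"]) (use \<open>x \<noteq> 0\<close> in auto)
  have at_0: "w 0 = w0" "c 0 = c0" "c' 0 $ k = J k" for k
    using r2 by (simp_all add: N_def c_def c0_def w_def w0_def c'_def J_def axis_def)
  note derivs = powr_minus_half_derivs_at_0[OF r2, of d xi, folded w0_def]
  have "w' 0 = - d * xi * w0 / r2"
    unfolding w'_def N_def using derivs(1) by simp
  then show ?thesis
    unfolding main at_0 derivs(2) by (simp add: algebra_simps)
qed

lemma sum_delta_mult: "(\<Sum>i\<in>UNIV. (if k = i then 1 else 0) * f i) = (f (k::'d::finite) :: real)"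
proof -
  have "(\<Sum>i\<in>UNIV. (if k = i then 1 else 0) * f i) = (\<Sum>i\<in>UNIV. if k = i then f i else 0)"
    by (rule sum.cong) auto
  then show ?thesis by simp
qed

lemma sum_swap_of_real_mult:
  fixes G :: "'d::finite \<Rightarrow> complex"
  shows "(\<Sum>i\<in>UNIV. \<Sum>k\<in>UNIV. of_real (u i k) * G k) = (\<Sum>k\<in>UNIV. of_real (\<Sum>i\<in>UNIV. u i k) * G k)"
  by (subst sum.swap) (simp add: sum_distrib_right)

text \<open>With \<open>J i k\<close> the entries of the Jacobian of the inversion at \<open>x\<close>, the following sums
  are the contractions occurring in the Laplacian; \<open>sum_inversion_jacobian_columns\<close> is the
  conformality of the inversion.\<close>

lemma sum_inversion_weight_second_derivs:
  fixes x :: "real^'d::finite"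
  assumes r2: "r2 = (\<Sum>i\<in>UNIV. (x$i)^2)" "r2 > 0" and d: "d = real CARD('d)"
  shows "(\<Sum>i\<in>UNIV. w0 * (d*(d+2)*(x$i)^2/r2^2 - d/r2)) = 2*d*w0/r2"
proof -
  have "(\<Sum>i\<in>UNIV. w0 * (d*(d+2)*(x$i)^2/r2^2 - d/r2))
      = (w0*d*(d+2)/r2^2) * (\<Sum>i\<in>UNIV. (x$i)^2) - (\<Sum>i\<in>(UNIV::'d set). w0*d/r2)"
    by (simp add: sum_subtractf sum_distrib_left algebra_simps sum_divide_distrib sum.distrib
        add_divide_distrib)
  also have "\<dots> = (w0*d*(d+2)/r2^2) * r2 - d * (w0*d/r2)"
    using r2 d by simp
  also have "\<dots> = 2*d*w0/r2"
    using r2(2) by (simp add: field_simps power2_eq_square)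
  finally show ?thesis .
qed

lemma sum_inversion_weight_derivs_jacobian:
  fixes x :: "real^'d::finite"
  assumes r2: "r2 = (\<Sum>i\<in>UNIV. (x$i)^2)" "r2 > 0"
  shows "(\<Sum>i\<in>UNIV. 2 * (- d * (x$i) * w0 / r2) * ((if k = i then 1 else 0) / r2 - 2 * (x$i) * x$k / r2^2))
    = 2*d*w0*(x$k)/r2^2"
proof -
  have "(\<Sum>i\<in>UNIV. 2 * (- d * (x$i) * w0 / r2) * ((if k = i then 1 else 0) / r2 - 2 * (x$i) * x$k / r2^2))
      = (\<Sum>i\<in>UNIV. (if k = i then 1 else 0) * (-2*d*w0/r2^2 * x$i) + (4*d*w0*(x$k)/r2^3) * (x$i)^2)"
    by (rule sum.cong) (use r2(2) in \<open>auto simp: field_simps power2_eq_square power3_eq_cube\<close>)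
  also have "\<dots> = -2*d*w0/r2^2 * x$k + (4*d*w0*(x$k)/r2^3) * r2"
    unfolding sum.distrib sum_distrib_left[symmetric] sum_delta_mult r2(1) ..
  also have "\<dots> = 2*d*w0*(x$k)/r2^2"
    using r2(2) by (simp add: field_simps power2_eq_square power3_eq_cube)
  finally show ?thesis .
qed

lemma sum_inversion_jacobian_columns:
  fixes x :: "real^'d::finite"
  assumes r2: "r2 = (\<Sum>i\<in>UNIV. (x$i)^2)" "r2 > 0"
  shows "(\<Sum>i\<in>UNIV. ((if k = i then 1 else 0) / r2 - 2 * (x$i) * x$k / r2^2)
      * ((if l = i then 1 else 0) / r2 - 2 * (x$i) * x$l / r2^2)) = (if k = l then 1 / r2^2 else 0)"
proof -
  have "(\<Sum>i\<in>UNIV. ((if k = i then 1 else 0) / r2 - 2 * (x$i) * x$k / r2^2)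
      * ((if l = i then 1 else 0) / r2 - 2 * (x$i) * x$l / r2^2))
     = (\<Sum>i\<in>UNIV. (if k = i then 1 else 0) * ((if l = i then 1 else 0)/r2^2 - 2 * x$i * x$l / r2^3)
         + (if l = i then 1 else 0) * (- 2 * x$i * x$k / r2^3) + (4 * x$k * x$l / r2^4) * (x$i)^2)"
    by (rule sum.cong) (use r2(2) in \<open>auto simp: field_simps power2_eq_square power3_eq_cube power4_eq_xxxx\<close>)
  also have "\<dots> = ((if l = k then 1 else 0)/r2^2 - 2 * x$k * x$l / r2^3) + (- 2 * x$l * x$k / r2^3)
      + (4 * x$k * x$l / r2^4) * r2"
    unfolding sum.distrib sum_distrib_left[symmetric] sum_delta_mult r2(1) ..
  also have "\<dots> = (if k = l then 1 / r2^2 else 0)"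
    using r2(2) by (auto simp: field_simps power2_eq_square power3_eq_cube power4_eq_xxxx)
  finally show ?thesis .
qed

lemma sum_inversion_second_derivs:
  fixes x :: "real^'d::finite"
  assumes r2: "r2 = (\<Sum>i\<in>UNIV. (x$i)^2)" "r2 > 0" and d: "d = real CARD('d)"
  shows "(\<Sum>i\<in>UNIV. -4 * (x$i) * (if k = i then 1 else 0) / r2^2 + (8*(x$i)^2/r2^3 - 2/r2^2) * x$k)
    = (4 - 2*d) * x$k / r2^2"
proof -
  have "(\<Sum>i\<in>UNIV. -4 * (x$i) * (if k = i then 1 else 0) / r2^2 + (8*(x$i)^2/r2^3 - 2/r2^2) * x$k)
      = (\<Sum>i\<in>UNIV. (if k = i then 1 else 0) * (-4 * x$i / r2^2) + (8 * x$k / r2^3) * (x$i)^2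
          + (- 2 * x$k / r2^2))"
    by (rule sum.cong) (use r2(2) in \<open>auto simp: field_simps power2_eq_square power3_eq_cube\<close>)
  also have "\<dots> = (-4 * x$k / r2^2) + (8 * x$k / r2^3) * r2 + (\<Sum>i\<in>(UNIV::'d set). - 2 * x$k / r2^2)"
    unfolding sum.distrib sum_distrib_left[symmetric] sum_delta_mult r2(1) ..
  also have "\<dots> = (4 - 2*d) * x$k / r2^2"
    using r2(2) d by (simp add: field_simps power2_eq_square power3_eq_cube)
  finally show ?thesis .
qed

lemma sum_inversion_first_order_terms:
  fixes x :: "real^'d::finite" and G :: "'d \<Rightarrow> complex"
  assumes r2: "r2 = (\<Sum>i\<in>UNIV. (x$i)^2)" "r2 > 0" and d: "d = real CARD('d)"
  defines "J \<equiv> (\<lambda>i k. (if k = i then 1 else 0) / r2 - 2 * (x$i) * x$k / r2^2)"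
  defines "J' \<equiv> (\<lambda>i k. -4 * (x$i) * (if k = i then 1 else 0) / r2^2 + (8*(x$i)^2/r2^3 - 2/r2^2) * x$k)"
  shows "(\<Sum>i\<in>UNIV. 2 * of_real (- d * (x$i) * w0 / r2) * (\<Sum>k\<in>UNIV. of_real (J i k) * G k))
      + of_real w0 * (\<Sum>i\<in>UNIV. \<Sum>k\<in>UNIV. of_real (J' i k) * G k)
    = (\<Sum>k\<in>UNIV. of_real (4*w0*(x$k)/r2^2) * G k)"
proof -
  have "(\<Sum>i\<in>UNIV. 2 * of_real (- d * (x$i) * w0 / r2) * (\<Sum>k\<in>UNIV. of_real (J i k) * G k))
      = (\<Sum>i\<in>UNIV. \<Sum>k\<in>UNIV. of_real (2 * (- d * (x$i) * w0 / r2) * J i k) * G k)"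
    by (simp add: sum_distrib_left mult.assoc)
  also have "\<dots> = (\<Sum>k\<in>UNIV. of_real (2*d*w0*(x$k)/r2^2) * G k)"
    unfolding sum_swap_of_real_mult J_def sum_inversion_weight_derivs_jacobian[OF r2] ..
  finally have "(\<Sum>i\<in>UNIV. 2 * of_real (- d * (x$i) * w0 / r2) * (\<Sum>k\<in>UNIV. of_real (J i k) * G k))
      + of_real w0 * (\<Sum>i\<in>UNIV. \<Sum>k\<in>UNIV. of_real (J' i k) * G k)
    = (\<Sum>k\<in>UNIV. of_real (2*d*w0*(x$k)/r2^2) * G k + of_real (w0 * ((4 - 2*d) * x$k / r2^2)) * G k)"
    unfolding sum_swap_of_real_mult J'_def sum_inversion_second_derivs[OF r2 d]
    by (simp add: sum.distrib sum_distrib_left mult.assoc)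
  also have "\<dots> = (\<Sum>k\<in>UNIV. of_real (4*w0*(x$k)/r2^2) * G k)"
  proof (rule sum.cong[OF refl])
    fix k
    have "2*d*w0*(x$k)/r2^2 + w0 * ((4 - 2*d) * x$k / r2^2) = 4*w0*(x$k)/r2^2"
      using r2(2) by (simp add: field_simps)
    then show "of_real (2*d*w0*(x$k)/r2^2) * G k + of_real (w0 * ((4 - 2*d) * x$k / r2^2)) * G k
        = of_real (4*w0*(x$k)/r2^2) * G k"
      by (metis distrib_right of_real_add)
  qed
  finally show ?thesis .
qed

lemma sum_inversion_second_order_terms:
  fixes x :: "real^'d::finite" and H :: "'d \<Rightarrow> 'd \<Rightarrow> complex"
  assumes r2: "r2 = (\<Sum>i\<in>UNIV. (x$i)^2)" "r2 > 0"
  defines "J \<equiv> (\<lambda>i k. (if k = i then 1 else 0) / r2 - 2 * (x$i) * x$k / r2^2)"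
  shows "(\<Sum>i\<in>UNIV. \<Sum>k\<in>UNIV. of_real (J i k) * (\<Sum>l\<in>UNIV. of_real (J i l) * H k l))
    = (\<Sum>k\<in>UNIV. of_real (1/r2^2) * H k k)"
proof -
  have "(\<Sum>i\<in>UNIV. \<Sum>k\<in>UNIV. of_real (J i k) * (\<Sum>l\<in>UNIV. of_real (J i l) * H k l))
      = (\<Sum>k\<in>UNIV. \<Sum>i\<in>UNIV. \<Sum>l\<in>UNIV. of_real (J i k * J i l) * H k l)"
    by (subst sum.swap) (simp add: sum_distrib_left mult.assoc)
  also have "\<dots> = (\<Sum>k\<in>UNIV. \<Sum>l\<in>UNIV. of_real (\<Sum>i\<in>UNIV. J i k * J i l) * H k l)"
    by (rule sum.cong[OF refl], rule sum_swap_of_real_mult)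
  also have "\<dots> = (\<Sum>k\<in>UNIV. \<Sum>l\<in>UNIV. if k = l then of_real (1 / r2^2) * H k l else 0)"
    unfolding J_def sum_inversion_jacobian_columns[OF r2] by (intro sum.cong) auto
  finally show ?thesis by simp
qed

lemma sum_regroup:
  fixes c :: "'a::comm_ring"
  shows "(\<Sum>i\<in>I. a i + b i + c * (\<Sum>k\<in>K. x i k + y i k))
    = (\<Sum>i\<in>I. a i) + ((\<Sum>i\<in>I. b i) + c * (\<Sum>i\<in>I. \<Sum>k\<in>K. y i k)) + c * (\<Sum>i\<in>I. \<Sum>k\<in>K. x i k)"
  by (simp add: sum.distrib distrib_left sum_distrib_left ac_simps)

lemma sum_pd_pd_U_op_terms:
  fixes x :: "real^'d::finite" and q0 :: complex and G :: "'d \<Rightarrow> complex" and H :: "'d \<Rightarrow> 'd \<Rightarrow> complex"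
  assumes r2: "r2 = (\<Sum>i\<in>UNIV. (x$i)^2)" "r2 > 0" and d: "d = real CARD('d)"
  defines "J \<equiv> (\<lambda>i k. (if k = i then 1 else 0) / r2 - 2 * (x$i) * x$k / r2^2)"
  defines "J' \<equiv> (\<lambda>i k. -4 * (x$i) * (if k = i then 1 else 0) / r2^2 + (8*(x$i)^2/r2^3 - 2/r2^2) * x$k)"
  shows "(\<Sum>i\<in>UNIV. of_real (w0 * (d*(d+2)*(x$i)^2/r2^2 - d/r2)) * q0
      + 2 * of_real (- d * (x$i) * w0 / r2) * (\<Sum>k\<in>UNIV. of_real (J i k) * G k)
      + of_real w0 * (\<Sum>k\<in>UNIV. of_real (J i k) * (\<Sum>l\<in>UNIV. of_real (J i l) * H k l) + of_real (J' i k) * G k))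
    = of_real w0 * (of_real (1/r2) * (\<Sum>i\<in>UNIV. 2 * q0 + 4 * of_real (x$i / r2) * G i + of_real (1/r2) * H i i))"
proof -
  have "(\<Sum>i\<in>UNIV. of_real (w0 * (d*(d+2)*(x$i)^2/r2^2 - d/r2)) * q0) = of_real (2*d*w0/r2) * q0"
    unfolding sum_distrib_right[symmetric] of_real_sum[symmetric] sum_inversion_weight_second_derivs[OF r2 d] ..
  moreover have "(\<Sum>i\<in>UNIV. 2 * q0 + 4 * of_real (x$i / r2) * G i + of_real (1/r2) * H i i)
      = of_real (2 * d) * q0 + (\<Sum>k\<in>UNIV. 4 * of_real (x$k / r2) * G k) + (\<Sum>k\<in>UNIV. of_real (1/r2) * H k k)"
    unfolding sum.distrib using d by simp
  ultimately show ?thesis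
    unfolding sum_regroup J_def J'_def sum_inversion_first_order_terms[OF r2 d]
      sum_inversion_second_order_terms[OF r2]
    by (simp add: distrib_left sum_distrib_left power2_eq_square mult_ac)
qed

lemma pd_pd_h_pow_2_mult:
  fixes q :: "real^'d::finite \<Rightarrow> complex"
  assumes q: "smooth_fun q"
  shows "pd i (pd i (\<lambda>y. h_pow 2 y * q y)) z
    = 2 * q z + 4 * of_real (z$i) * pd i q z + h_pow 2 z * pd i (pd i q) z"
proof -
  have h: "h_pow 2 differentiable (at y)" for y :: "real^'d"
    by (rule smooth_fun_differentiable[OF smooth_fun_h_pow_2])
  have coord: "(\<lambda>y::real^'d. 2 * complex_of_real (y$i)) differentiable (at y)" for y
    by (intro smooth_fun_differentiable smooth_fun_cmult smooth_fun_coord)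
  have dq: "q differentiable (at y)" "pd i q differentiable (at y)" for y
    using q by (auto intro: smooth_fun_differentiable smooth_fun_pd)
  have "pd i (\<lambda>y. h_pow 2 y * q y) = (\<lambda>y. 2 * of_real (y$i) * q y + h_pow 2 y * pd i q y)"
    using pd_mult[OF h dq(1)] by (auto simp: pd_h_pow_2)
  moreover have "pd i (\<lambda>y. 2 * of_real (y$i) * q y + h_pow 2 y * pd i q y) z
      = pd i (\<lambda>y. 2 * of_real (y$i) * q y) z + pd i (\<lambda>y. h_pow 2 y * pd i q y) z"
    by (rule pd_add) (auto intro!: differentiable_mult coord dq h)
  ultimately have "pd i (pd i (\<lambda>y. h_pow 2 y * q y)) z
      = pd i (\<lambda>y. 2 * of_real (y$i) * q y) z + pd i (\<lambda>y. h_pow 2 y * pd i q y) z"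
    by simp
  also have "pd i (\<lambda>y. 2 * of_real (y$i) * q y) z = 2 * q z + 2 * of_real (z$i) * pd i q z"
    using pd_mult[OF coord dq(1), of i z]
      pd_cmult[OF smooth_fun_differentiable[OF smooth_fun_coord], of i 2 i z]
    by (simp add: pd_coord)
  also have "pd i (\<lambda>y. h_pow 2 y * pd i q y) z = 2 * of_real (z$i) * pd i q z + h_pow 2 z * pd i (pd i q) z"
    using pd_mult[OF h dq(2), of i z] by (simp add: pd_h_pow_2)
  finally show ?thesis
    by simp
qed

lemma laplacian_U_op_nonzero:
  fixes q :: "real^'d::finite \<Rightarrow> complex"
  assumes "smooth_fun q" "x \<noteq> 0"
  shows "laplacian (U_op q) x = U_op (conj_laplacian q) x"
proof -
  define r2 where "r2 = norm x ^ 2"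
  define d where "d = real CARD('d)"
  define w0 where "w0 = r2 powr (- d / 2)"
  define c0 where "c0 = (1 / r2) *\<^sub>R x"
  have "norm x ^ 2 = (\<Sum>i\<in>UNIV. x$i * x$i)"
    by (simp add: power2_norm_eq_inner inner_vec_def)
  moreover have "norm x ^ 2 > 0"
    using \<open>x \<noteq> 0\<close> by simp
  ultimately have r2: "r2 = (\<Sum>i\<in>UNIV. (x$i)^2)" "r2 > 0"
    unfolding r2_def by (simp_all add: power2_eq_square)
  have "laplacian (U_op q) x = of_real w0 * (of_real (1/r2)
      * (\<Sum>i\<in>UNIV. 2 * q c0 + 4 * of_real (x$i / r2) * pd i q c0 + of_real (1/r2) * pd i (pd i q) c0))"
    unfolding laplacian_def pd_pd_U_op[OF assms, folded r2_def d_def, folded w0_def c0_def]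
    by (rule sum_pd_pd_U_op_terms[OF r2 d_def])
  also have "\<dots> = U_op (conj_laplacian q) x"
  proof -
    have "norm c0 ^ 2 = 1 / r2"
      unfolding c0_def r2_def using \<open>x \<noteq> 0\<close> by (simp add: power2_eq_square)
    then have "h_pow 2 c0 = of_real (1/r2)"
      unfolding h_pow_def by simp
    then have "conj_laplacian q c0 = of_real (1/r2)
        * (\<Sum>i\<in>UNIV. 2 * q c0 + 4 * of_real (x$i / r2) * pd i q c0 + of_real (1/r2) * pd i (pd i q) c0)"
      unfolding conj_laplacian_def laplacian_def pd_pd_h_pow_2_mult[OF assms(1)] by (simp add: c0_def)
    moreover have "U_op (conj_laplacian q) x = of_real w0 * conj_laplacian q c0"
      using U_op_eq_powr[OF \<open>x \<noteq> 0\<close>] by (simp add: w0_def r2_def d_def c0_def)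
    ultimately show ?thesis by simp
  qed
  finally show ?thesis .
qed

text \<open>At the origin both sides vanish: \<open>U q\<close> vanishes near \<open>0\<close>, and \<open>U p 0 = 0\<close> for every \<open>p\<close>
  because \<open>0 powr a = 0\<close>.\<close>

lemma laplacian_U_op:
  fixes q :: "real^'d::finite \<Rightarrow> complex"
  assumes "test_fun q"
  shows "laplacian (U_op q) = U_op (conj_laplacian q)"
proof
  fix x :: "real^'d"
  show "laplacian (U_op q) x = U_op (conj_laplacian q) x"
  proof (cases "x = 0")
    case True
    obtain r where "r > 0" "\<And>y. y \<in> ball 0 r \<Longrightarrow> U_op q y = 0"
      using U_op_vanishes_near_0[OF assms] by blast
    then have "pd i (pd i (U_op q)) 0 = 0" for i
      using pdl_vanishes_on_open[of "ball 0 r" "U_op q" 0 "[i, i]"] by simp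
    with True show ?thesis
      by (simp add: laplacian_def U_op_def)
  next
    case False
    with assms show ?thesis
      by (simp add: laplacian_U_op_nonzero test_fun_def)
  qed
qed

lemma one_minus_lap_pow_U_op:
  fixes f :: "real^'d::finite \<Rightarrow> complex"
  assumes "test_fun f"
  shows "one_minus_lap_pow n (U_op f) = U_op (apply_op (op_one_minus_conj_laplacian_pow n) f)"
proof (induction n)
  case 0
  show ?case
    by (simp add: one_minus_lap_pow_def apply_op_one_minus_conj_laplacian_pow_0)
next
  case (Suc n)
  have "test_fun (apply_op (op_one_minus_conj_laplacian_pow n) f)"
    by (rule test_fun_apply_op[OF assms smooth_coeffs_op_one_minus_conj_laplacian_pow])
  then have "one_minus_lap_pow (Suc n) (U_op f) = (\<lambda>x. U_op (apply_op (op_one_minus_conj_laplacian_pow n) f) x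
      - U_op (conj_laplacian (apply_op (op_one_minus_conj_laplacian_pow n) f)) x)"
    using Suc by (simp add: one_minus_lap_pow_def laplacian_U_op)
  also have "\<dots> = U_op (apply_op (op_one_minus_conj_laplacian_pow (Suc n)) f)"
    using assms unfolding test_fun_def
    by (simp add: U_op_def apply_op_one_minus_conj_laplacian_pow_Suc algebra_simps fun_eq_iff)
  finally show ?case .
qed

section \<open>Collecting the coefficients of each multi-index\<close>

definition op_coeff :: "'d::finite diff_op \<Rightarrow> ('d \<Rightarrow> nat) \<Rightarrow> real^'d \<Rightarrow> complex" where
  "op_coeff A \<gamma> = (\<lambda>x. \<Sum>t\<leftarrow>filter (\<lambda>t. count_list (fst t) = \<gamma>) A. snd t x)"

lemma sum_sum_list_filter:
  fixes G :: "'a \<Rightarrow> 'b::comm_monoid_add"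
  assumes "finite S" "\<forall>t\<in>set xs. k t \<in> S"
  shows "(\<Sum>\<gamma>\<in>S. \<Sum>t\<leftarrow>filter (\<lambda>t. k t = \<gamma>) xs. G t) = (\<Sum>t\<leftarrow>xs. G t)"
  using assms(2)
proof (induction xs)
  case (Cons a xs)
  have "(\<Sum>\<gamma>\<in>S. \<Sum>t\<leftarrow>filter (\<lambda>t. k t = \<gamma>) (a # xs). G t)
      = (\<Sum>\<gamma>\<in>S. (if k a = \<gamma> then G a else 0)) + (\<Sum>\<gamma>\<in>S. \<Sum>t\<leftarrow>filter (\<lambda>t. k t = \<gamma>) xs. G t)"
    unfolding sum.distrib[symmetric] by (rule sum.cong) auto
  also have "(\<Sum>\<gamma>\<in>S. (if k a = \<gamma> then G a else 0)) = G a"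
    using Cons.prems assms(1) by (simp add: sum.delta)
  finally show ?case
    using Cons by simp
qed simp

lemma finite_mi_norm_le: "finite {\<gamma>::'d::finite \<Rightarrow> nat. mi_norm \<gamma> \<le> N}"
proof (rule finite_subset)
  show "{\<gamma>::'d \<Rightarrow> nat. mi_norm \<gamma> \<le> N} \<subseteq> PiE UNIV (\<lambda>_. {..N})"
  proof
    fix \<gamma> :: "'d \<Rightarrow> nat"
    assume "\<gamma> \<in> {\<gamma>. mi_norm \<gamma> \<le> N}"
    then have "\<gamma> i \<le> N" for i
      unfolding mi_norm_def using member_le_sum[of i UNIV \<gamma>] by simp
    then show "\<gamma> \<in> PiE UNIV (\<lambda>_. {..N})"
      by (simp add: PiE_iff)
  qed
  show "finite (PiE (UNIV::'d set) (\<lambda>_. {..N}))"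
    by (rule finite_PiE) auto
qed

lemma partial_sum_list:
  "(\<And>a. a \<in> set as \<Longrightarrow> smooth_fun (F a)) \<Longrightarrow>
    partial \<gamma> (\<lambda>y. \<Sum>a\<leftarrow>as. F a y) = (\<lambda>y. \<Sum>a\<leftarrow>as. partial \<gamma> (F a) y)"
  unfolding partial_def by (rule pdl_sum_list)

lemma apply_op_eq_sum_partial:
  fixes f :: "real^'d::finite \<Rightarrow> complex"
  assumes "smooth_coeffs A" "smooth_fun f" "\<forall>t\<in>set A. length (fst t) \<le> N"
  shows "apply_op A f x = (\<Sum>\<gamma>\<in>{\<gamma>. mi_norm \<gamma> \<le> N}. partial \<gamma> (\<lambda>y. op_coeff A \<gamma> y * f y) x)"
proof -
  have smooth: "smooth_fun (\<lambda>y. snd t y * f y)" if "t \<in> set A" for t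
    using assms(1,2) that unfolding smooth_coeffs_def by (auto intro: smooth_fun_mult)
  have "partial \<gamma> (\<lambda>y. op_coeff A \<gamma> y * f y) x
      = (\<Sum>t\<leftarrow>filter (\<lambda>t. count_list (fst t) = \<gamma>) A. pdl (fst t) (\<lambda>y. snd t y * f y) x)" for \<gamma>
  proof -
    have "partial \<gamma> (\<lambda>y. op_coeff A \<gamma> y * f y) x
        = (\<Sum>t\<leftarrow>filter (\<lambda>t. count_list (fst t) = \<gamma>) A. partial \<gamma> (\<lambda>y. snd t y * f y) x)"
      unfolding op_coeff_def sum_list_mult_const[symmetric] using smooth
      by (subst partial_sum_list) auto
    also have "\<dots> = (\<Sum>t\<leftarrow>filter (\<lambda>t. count_list (fst t) = \<gamma>) A. pdl (fst t) (\<lambda>y. snd t y * f y) x)"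
    proof (intro arg_cong[where f=sum_list] map_cong refl)
      fix t
      assume "t \<in> set (filter (\<lambda>t. count_list (fst t) = \<gamma>) A)"
      then show "partial \<gamma> (\<lambda>y. snd t y * f y) x = pdl (fst t) (\<lambda>y. snd t y * f y) x"
        using partial_count_list[OF smooth, of t "fst t"] by auto
    qed
    finally show ?thesis .
  qed
  then have "(\<Sum>\<gamma>\<in>{\<gamma>. mi_norm \<gamma> \<le> N}. partial \<gamma> (\<lambda>y. op_coeff A \<gamma> y * f y) x)
      = (\<Sum>t\<leftarrow>A. pdl (fst t) (\<lambda>y. snd t y * f y) x)"
    using assms(3)
    by (simp add: sum_sum_list_filter[OF finite_mi_norm_le] mi_norm_count_list)
  then show ?thesis
    by (simp add: apply_op_def)
qed

lemma sum_list_multiples: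
  "\<forall>t\<in>set ts. \<exists>c. snd t = (\<lambda>x. c * H x) \<Longrightarrow> \<exists>a. (\<lambda>x. \<Sum>t\<leftarrow>ts. snd t x) = (\<lambda>x. a * (H x :: 'a::semiring_0))"
proof (induction ts)
  case (Cons t ts)
  then obtain a c where "(\<lambda>x. \<Sum>t\<leftarrow>ts. snd t x) = (\<lambda>x. a * H x)" "snd t = (\<lambda>x. c * H x)"
    by auto
  then have "(\<lambda>x. \<Sum>t\<leftarrow>t # ts. snd t x) = (\<lambda>x. (c + a) * H x)"
    by (simp add: fun_eq_iff distrib_right)
  then show ?case by blast
qed (intro exI[of _ 0], simp)

lemma poly_deg_le_op_coeff:
  assumes "op_coeffs_deg_le W A"
  shows "poly_deg_le (W + mi_norm \<gamma>) (op_coeff A \<gamma>)"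
  unfolding op_coeff_def
proof (rule poly_deg_le_sum_list)
  fix t
  assume "t \<in> set (filter (\<lambda>t. count_list (fst t) = \<gamma>) A)"
  then have "poly_deg_le (W + length (fst t)) (snd t)" "count_list (fst t) = \<gamma>"
    using assms unfolding op_coeffs_deg_le_def by auto
  then show "poly_deg_le (W + mi_norm \<gamma>) (snd t)"
    by (metis mi_norm_count_list)
qed

lemma op_coeff_top_order:
  assumes "op_top_order_h_pow B e A" "mi_norm \<gamma> = B"
  shows "\<exists>a. op_coeff A \<gamma> = (\<lambda>x. a * h_pow e x)"
  unfolding op_coeff_def
proof (rule sum_list_multiples, intro ballI)
  fix t
  assume "t \<in> set (filter (\<lambda>t. count_list (fst t) = \<gamma>) A)"
  then have "t \<in> set A" "length (fst t) = B"
    using assms(2) by (auto simp: mi_norm_count_list)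
  then show "\<exists>c. snd t = (\<lambda>x. c * h_pow e x)"
    using assms(1) unfolding op_top_order_h_pow_def by blast
qed

lemma poly_deg_lt_op_coeff_pow:
  "poly_deg_lt (Suc (2 * n + mi_norm \<gamma>)) (op_coeff (op_one_minus_conj_laplacian_pow n) \<gamma>)"
  by (intro poly_deg_le_imp_poly_deg_lt poly_deg_le_op_coeff op_coeffs_deg_le_pow)

lemma U_op_one_minus_lap_pow_U_op:
  fixes f :: "real^'d::finite \<Rightarrow> complex"
  assumes "test_fun f" "x \<noteq> 0"
  shows "U_op (one_minus_lap_pow n (U_op f)) x = (\<Sum>\<gamma>\<in>{\<gamma>. mi_norm \<gamma> \<le> 2*n}.
    partial \<gamma> (\<lambda>y. op_coeff (op_one_minus_conj_laplacian_pow n) \<gamma> y * f y) x)"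
proof -
  have "\<forall>t\<in>set (op_one_minus_conj_laplacian_pow n :: 'd diff_op). length (fst t) \<le> 2*n"
    using op_top_order_h_pow_pow[where 'd = 'd and n = n] unfolding op_top_order_h_pow_def by blast
  with assms(1) show ?thesis
    unfolding one_minus_lap_pow_U_op[OF assms(1)] U_op_U_op[OF assms(2)]
    by (intro apply_op_eq_sum_partial smooth_coeffs_op_one_minus_conj_laplacian_pow)
      (simp_all add: test_fun_def)
qed

theorem corollary5p5:
  fixes n :: nat
  shows "\<exists>p :: ('d::finite \<Rightarrow> nat) \<Rightarrow> (real^'d \<Rightarrow> complex).
    (\<forall>\<gamma>. mi_norm \<gamma> \<le> 2*n \<longrightarrow> poly_deg_lt (4*n + 1) (p \<gamma>)) \<and>
    (\<forall>\<gamma>. mi_norm \<gamma> = 2*n \<longrightarrow> (\<exists>a. p \<gamma> = (\<lambda>x. a * h_pow (4*n) x))) \<and>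
    (\<forall>\<gamma>. mi_norm \<gamma> < 2*n \<longrightarrow> poly_deg_lt (4*n) (p \<gamma>)) \<and>
    (\<forall>f x. test_fun f \<longrightarrow> x \<noteq> 0 \<longrightarrow>
       U_op (one_minus_lap_pow n (U_op f)) x =
       (\<Sum>\<gamma>\<in>{\<gamma>. mi_norm \<gamma> \<le> 2*n}. partial \<gamma> (\<lambda>y. p \<gamma> y * f y) x))"
proof (intro exI[of _ "op_coeff (op_one_minus_conj_laplacian_pow n)"] conjI allI impI)
  fix \<gamma> :: "'d \<Rightarrow> nat"
  show "poly_deg_lt (4*n + 1) (op_coeff (op_one_minus_conj_laplacian_pow n) \<gamma>)" if "mi_norm \<gamma> \<le> 2*n"
    by (rule poly_deg_lt_mono[OF poly_deg_lt_op_coeff_pow]) (use that in simp)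
  show "poly_deg_lt (4*n) (op_coeff (op_one_minus_conj_laplacian_pow n) \<gamma>)" if "mi_norm \<gamma> < 2*n"
    by (rule poly_deg_lt_mono[OF poly_deg_lt_op_coeff_pow]) (use that in simp)
  show "\<exists>a. op_coeff (op_one_minus_conj_laplacian_pow n) \<gamma> = (\<lambda>x. a * h_pow (4*n) x)"
    if "mi_norm \<gamma> = 2*n"
    using op_top_order_h_pow_pow that by (rule op_coeff_top_order)
qed (rule U_op_one_minus_lap_pow_U_op)

end
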